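(* Let $L$ be a finite geometric lattice with a sheaf $F$, let $B=\widetilde L$ be its Boolean cover (with the induced sheaf $F$), and let $a$ be an atom of $L$. Let $B^a=\{x\in B: a\in x\}$, regarded as a Boolean lattice with atoms $\{a,b\}$ for $b\ne a$ (via the isomorphism $x\mapsto x\setminus\{a\}$ with the Boolean lattice of subsets of $A\setminus\{a\}$), with the restriction of $F$. Let $L^a=\{x\in L:x\ge a\}$ be the restriction and $\widetilde{L^a}$ its Boolean cover with induced sheaf $F$. Then for all $i$, $$\mathrm{HC}_i(B^a;F)\cong\mathrm{HC}_i(\widetilde{L^a};F).$$
   Context: A finite lattice is geometric if it is graded (rank function $rk$, $rk(\mathbf{0})=0$), atomic (every element is a join of rank-$1$ elements, called atoms; the empty join is $\mathbf{0}$), and $rk(x\vee y)+rk(x\wedge y)\le rk(x)+rk(y)$. $A$ denotes the set of atoms of $L$. $L^a$ is a graded atomic lattice with minimum $a$ whose atoms are the elements covering $a$. A sheaf $F$ on a poset assigns an $R$-module $F(x)$ to each element and a homomorphism $F^y_x:F(y)\to F(x)$ to each $x\le y$, functorially. Boolean cover of a graded atomic lattice $M$ with atoms $A_M$: the lattice $\widetilde M$ of subsets of $A_M$ under inclusion with $f:\widetilde M\to M$, $S\mapsto$ join of $S$ in $M$ ($\varnothing\mapsto\min M$); a sheaf $G$ on $M$ induces $G(S)=G(f(S))$ with maps $G^{f(T)}_{f(S)}$. Cellular homology of a Boolean lattice of subsets of $\{a_1,\dots,a_n\}$ with sheaf $G$: $C_k=\bigoplus_{|x|=k}G(x)$, $d=\sum\varepsilon^x_yG^x_y$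 over $y\subset x$, $|y|=|x|-1$, $\varepsilon^x_y=(-1)^{j-1}$ if $x=\{a_{i_1},\dots,a_{i_k}\}$ ($i_1<\cdots<i_k$), $y=x\setminus\{a_{i_j}\}$; $\mathrm{HC}_*$ its homology (independent of the ordering up to isomorphism). *)

theory Defs
  imports "HOL-Algebra.Module"
begin

text \<open>A finite lattice is modelled as a finite type of class complete_lattice
  (every finite lattice is complete). Joins are Sup / sup, meets inf.\<close>

definition lcovers :: "'a::order \<Rightarrow> 'a \<Rightarrow> bool" where
  "lcovers x y \<longleftrightarrow> x < y \<and> \<not> (\<exists>z. x < z \<and> z < y)"

definition latoms :: "'a::{order,bot} set" where
  "latoms = {x. lcovers bot x}"

definition geometric_lattice :: "('a::{finite,complete_lattice}) itself \<Rightarrow> bool" where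
  "geometric_lattice _ \<longleftrightarrow>
     (\<exists>rk::'a \<Rightarrow> nat. rk bot = 0 \<and> (\<forall>x y. lcovers x y \<longrightarrow> rk y = rk x + 1)
        \<and> (\<forall>x y. rk (sup x y) + rk (inf x y) \<le> rk x + rk y))
     \<and> (\<forall>x::'a. x = Sup {p \<in> latoms. p \<le> x})"

text \<open>Least upper bound of S computed inside a sub-poset M (used for the
  join in the restricted lattice L^a; the empty join is the minimum of M).\<close>
definition lub_in :: "'a::order set \<Rightarrow> 'a set \<Rightarrow> 'a" where
  "lub_in M S = (THE u. u \<in> M \<and> (\<forall>s\<in>S. s \<le> u) \<and> (\<forall>v\<in>M. (\<forall>s\<in>S. s \<le> v) \<longrightarrow> u \<le> v))"

text \<open>res y x is the map F^y_x : F(y) \<rightarrow> F(x) for x \<le> y.\<close>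
definition is_sheaf ::
  "'r ring \<Rightarrow> ('a::order \<Rightarrow> ('r,'m) module) \<Rightarrow> ('a \<Rightarrow> 'a \<Rightarrow> 'm \<Rightarrow> 'm) \<Rightarrow> bool" where
  "is_sheaf R F res \<longleftrightarrow>
     (\<forall>x. module R (F x))
     \<and> (\<forall>x y. x \<le> y \<longrightarrow>
          (\<forall>u\<in>carrier (F y). res y x u \<in> carrier (F x))
        \<and> (\<forall>u\<in>carrier (F y). \<forall>v\<in>carrier (F y).
              res y x (u \<oplus>\<^bsub>F y\<^esub> v) = res y x u \<oplus>\<^bsub>F x\<^esub> res y x v)
        \<and> (\<forall>r\<in>carrier R. \<forall>u\<in>carrier (F y).
              res y x (r \<odot>\<^bsub>F y\<^esub> u) = r \<odot>\<^bsub>F x\<^esub> res y x u))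
     \<and> (\<forall>x. \<forall>u\<in>carrier (F x). res x x u = u)
     \<and> (\<forall>x y z. x \<le> y \<and> y \<le> z \<longrightarrow> (\<forall>u\<in>carrier (F z). res y x (res z y u) = res z x u))"

text \<open>Boolean lattice of subsets of the finite atom set X, ordered by the injection
  idx (a_i before a_j iff idx a_i < idx a_j), with sheaf G and maps Gm T S : G T \<rightarrow> G S.
  A k-chain is an element of the direct sum (= product, finitely many summands)
  of G S over S \<subseteq> X with card S = k, represented as a function that is undefined
  outside that index set.\<close>

definition bchains :: "'b set \<Rightarrow> ('b set \<Rightarrow> ('r,'m) module) \<Rightarrow> nat \<Rightarrow> ('b set \<Rightarrow> 'm) set" where
  "bchains X G k = {c. (\<forall>S. S \<subseteq> X \<and> card S = k \<longrightarrow> c S \<in> carrier (G S))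
                     \<and> (\<forall>S. \<not> (S \<subseteq> X \<and> card S = k) \<longrightarrow> c S = undefined)}"

definition bzero :: "'b set \<Rightarrow> ('b set \<Rightarrow> ('r,'m) module) \<Rightarrow> nat \<Rightarrow> 'b set \<Rightarrow> 'm" where
  "bzero X G k = (\<lambda>S. if S \<subseteq> X \<and> card S = k then \<zero>\<^bsub>G S\<^esub> else undefined)"

definition badd :: "'b set \<Rightarrow> ('b set \<Rightarrow> ('r,'m) module) \<Rightarrow> nat
    \<Rightarrow> ('b set \<Rightarrow> 'm) \<Rightarrow> ('b set \<Rightarrow> 'm) \<Rightarrow> 'b set \<Rightarrow> 'm" where
  "badd X G k c c' = (\<lambda>S. if S \<subseteq> X \<and> card S = k then c S \<oplus>\<^bsub>G S\<^esub> c' S else undefined)"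

definition bsmult :: "'b set \<Rightarrow> ('b set \<Rightarrow> ('r,'m) module) \<Rightarrow> nat
    \<Rightarrow> 'r \<Rightarrow> ('b set \<Rightarrow> 'm) \<Rightarrow> 'b set \<Rightarrow> 'm" where
  "bsmult X G k r c = (\<lambda>S. if S \<subseteq> X \<and> card S = k then r \<odot>\<^bsub>G S\<^esub> c S else undefined)"

text \<open>Sign \<epsilon>^x_y = (-1)^(j-1) where x = insert b S and b is the j-th element of x.\<close>
definition bsign :: "('b \<Rightarrow> nat) \<Rightarrow> 'b set \<Rightarrow> 'b \<Rightarrow> ('r,'m) module \<Rightarrow> 'm \<Rightarrow> 'm" where
  "bsign idx S b M v = (if even (card {z \<in> S. idx z < idx b}) then v else \<ominus>\<^bsub>M\<^esub> v)"

definition bdiff :: "'b set \<Rightarrow> ('b \<Rightarrow> nat) \<Rightarrow> ('b set \<Rightarrow> ('r,'m) module)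
    \<Rightarrow> ('b set \<Rightarrow> 'b set \<Rightarrow> 'm \<Rightarrow> 'm) \<Rightarrow> nat \<Rightarrow> ('b set \<Rightarrow> 'm) \<Rightarrow> 'b set \<Rightarrow> 'm" where
  "bdiff X idx G Gm k c = (\<lambda>S. if S \<subseteq> X \<and> card S + 1 = k
      then finsum (G S) (\<lambda>b. bsign idx S b (G S) (Gm (insert b S) S (c (insert b S)))) (X - S)
      else undefined)"

definition bcycles :: "'b set \<Rightarrow> ('b \<Rightarrow> nat) \<Rightarrow> ('b set \<Rightarrow> ('r,'m) module)
    \<Rightarrow> ('b set \<Rightarrow> 'b set \<Rightarrow> 'm \<Rightarrow> 'm) \<Rightarrow> nat \<Rightarrow> ('b set \<Rightarrow> 'm) set" where
  "bcycles X idx G Gm k =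
     {c \<in> bchains X G k. k = 0 \<or> bdiff X idx G Gm k c = bzero X G (k - 1)}"

definition bbounds :: "'b set \<Rightarrow> ('b \<Rightarrow> nat) \<Rightarrow> ('b set \<Rightarrow> ('r,'m) module)
    \<Rightarrow> ('b set \<Rightarrow> 'b set \<Rightarrow> 'm \<Rightarrow> 'm) \<Rightarrow> nat \<Rightarrow> ('b set \<Rightarrow> 'm) set" where
  "bbounds X idx G Gm k = bdiff X idx G Gm (Suc k) ` bchains X G (Suc k)"

definition bcoset :: "'b set \<Rightarrow> ('b \<Rightarrow> nat) \<Rightarrow> ('b set \<Rightarrow> ('r,'m) module)
    \<Rightarrow> ('b set \<Rightarrow> 'b set \<Rightarrow> 'm \<Rightarrow> 'm) \<Rightarrow> nat \<Rightarrow> ('b set \<Rightarrow> 'm) \<Rightarrow> ('b set \<Rightarrow> 'm) set" where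
  "bcoset X idx G Gm k c = badd X G k c ` bbounds X idx G Gm k"

text \<open>The homology module HC_k = ker d_k / im d_(k+1) (with d_0 = 0), as the
  quotient module of cosets; operations via representatives.\<close>
definition HC :: "'b set \<Rightarrow> ('b \<Rightarrow> nat) \<Rightarrow> ('b set \<Rightarrow> ('r,'m) module)
    \<Rightarrow> ('b set \<Rightarrow> 'b set \<Rightarrow> 'm \<Rightarrow> 'm) \<Rightarrow> nat \<Rightarrow> ('r, ('b set \<Rightarrow> 'm) set) module" where
  "HC X idx G Gm k =
     \<lparr> carrier = bcoset X idx G Gm k ` bcycles X idx G Gm k,
       mult = (\<lambda>_ _. undefined), one = undefined,
       zero = bcoset X idx G Gm k (bzero X G k),
       add = (\<lambda>P Q. bcoset X idx G Gm k (badd X G k (SOME p. p \<in> P) (SOME q. q \<in> Q))),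
       smult = (\<lambda>r P. bcoset X idx G Gm k (bsmult X G k r (SOME p. p \<in> P))) \<rparr>"

definition mod_isomorphic :: "'r ring \<Rightarrow> ('r,'c) module \<Rightarrow> ('r,'d) module \<Rightarrow> bool" where
  "mod_isomorphic R M N \<longleftrightarrow> (\<exists>h. bij_betw h (carrier M) (carrier N)
      \<and> (\<forall>P\<in>carrier M. \<forall>Q\<in>carrier M. h (P \<oplus>\<^bsub>M\<^esub> Q) = h P \<oplus>\<^bsub>N\<^esub> h Q)
      \<and> (\<forall>r\<in>carrier R. \<forall>P\<in>carrier M. h (r \<odot>\<^bsub>M\<^esub> P) = r \<odot>\<^bsub>N\<^esub> h P))"

end

theory Submission
  imports Defs "HOL-Algebra.AbelCoset"
begin

text \<open>
  Both sides are homologies of Boolean cellular complexes with coefficients taken from one system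
  H of restriction maps on the subsets of the set Y of atoms of L^a. On B^a the cell S of A - {a}
  carries F(a \<squnion> \<Squnion>S) = H(g ` S) with g b = a \<squnion> b, and since L is geometric g maps A - {a} onto Y.
  So it suffices that pulling the coefficients back along a surjection g : X \<rightarrow> Y does not change
  homology. If g is injective this is a relabelling of the cells, with signs compensating for the
  change of order of the atoms. Otherwise g b = g b' for some b \<noteq> b'; merging the coefficient of
  every cell containing b' into its twin containing b is a chain retraction onto the complex on
  X - {b'}, a homotopy inverse of extension by zero, and induction on the size of X finishes.
\<close>

lemma abelian_group_hom_additiveI:
  assumes "abelian_group G" "abelian_group H"
    and "\<And>u. u \<in> carrier G \<Longrightarrow> h u \<in> carrier H"
    and "\<And>u v. u \<in> carrier G \<Longrightarrow> v \<in> carrier G \<Longrightarrow> h (u \<oplus>\<^bsub>G\<^esub> v) = h u \<oplus>\<^bsub>H\<^esub> h v"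
  shows "abelian_group_hom G H h"
  using assms
  by (intro abelian_group_homI group_hom.intro group_hom_axioms.intro abelian_group.a_group)
     (auto simp: hom_def)

definition signed :: "('a, 'b) ring_scheme \<Rightarrow> nat \<Rightarrow> 'a \<Rightarrow> 'a" where
  "signed M n v = (if even n then v else \<ominus>\<^bsub>M\<^esub> v)"

context abelian_group
begin

lemma signed_closed [simp]: "v \<in> carrier G \<Longrightarrow> signed G n v \<in> carrier G"
  by (simp add: signed_def)

lemma signed_signed: "v \<in> carrier G \<Longrightarrow> signed G m (signed G n v) = signed G (m + n) v"
  by (auto simp: signed_def)

lemma signed_add: "u \<in> carrier G \<Longrightarrow> v \<in> carrier G \<Longrightarrow> signed G n (u \<oplus> v) = signed G n u \<oplus> signed G n v"
  by (auto simp: signed_def minus_add)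

lemma signed_zero [simp]: "signed G n \<zero> = \<zero>"
  by (simp add: signed_def)

lemma signed_parity_cong: "even m = even n \<Longrightarrow> signed G m v = signed G n v"
  by (simp add: signed_def)

lemma signed_cancel: "v \<in> carrier G \<Longrightarrow> odd (m + n) \<Longrightarrow> signed G m v \<oplus> signed G n v = \<zero>"
  by (auto simp: signed_def r_neg l_neg)

lemma signed_add_eq_zero:
  assumes "u \<in> carrier G" "v \<in> carrier G" "signed G n u \<oplus> v = \<zero>"
  shows "v = signed G (Suc n) u"
proof -
  have "\<ominus> signed G n u = v" using assms by (intro minus_equality) (simp_all add: a_comm)
  then show ?thesis using assms(1) by (auto simp: signed_def)
qed

lemma signed_finsum:
  "finite A \<Longrightarrow> f \<in> A \<rightarrow> carrier G \<Longrightarrow> signed G n (finsum G f A) = finsum G (\<lambda>x. signed G n (f x)) A"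
  by (induction A rule: finite_induct) (simp_all add: Pi_def signed_add finsum_closed)

lemma finsum_remove:
  "finite A \<Longrightarrow> x \<in> A \<Longrightarrow> f \<in> A \<rightarrow> carrier G \<Longrightarrow> finsum G f A = f x \<oplus> finsum G f (A - {x})"
proof -
  assume "finite A" "x \<in> A" "f \<in> A \<rightarrow> carrier G"
  then have "finsum G f (insert x (A - {x})) = f x \<oplus> finsum G f (A - {x})"
    by (intro finsum_insert) auto
  with \<open>x \<in> A\<close> show ?thesis by (simp add: insert_absorb)
qed

end

lemma (in module) signed_smult:
  "r \<in> carrier R \<Longrightarrow> v \<in> carrier M \<Longrightarrow> signed M n (r \<odot>\<^bsub>M\<^esub> v) = r \<odot>\<^bsub>M\<^esub> signed M n v"
  by (simp add: signed_def smult_r_minus)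

lemma (in abelian_group_hom) hom_signed: "u \<in> carrier G \<Longrightarrow> h (signed G n u) = signed H n (h u)"
  by (simp add: signed_def)

section \<open>The cellular chain complex of a Boolean lattice\<close>

definition count_below :: "('b \<Rightarrow> nat) \<Rightarrow> 'b set \<Rightarrow> 'b \<Rightarrow> nat" where
  "count_below idx S x = card {z \<in> S. idx z < idx x}"

lemma count_below_insert:
  "finite T \<Longrightarrow> x \<notin> T \<Longrightarrow>
     count_below idx (insert x T) y = count_below idx T y + (if idx x < idx y then 1 else 0)"
proof -
  assume T: "finite T" "x \<notin> T"
  have "{z \<in> insert x T. idx z < idx y} =
      (if idx x < idx y then insert x {z \<in> T. idx z < idx y} else {z \<in> T. idx z < idx y})"
    by auto
  then show ?thesis using T by (simp add: count_below_def)
qed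

lemma count_below_insert_swap:
  assumes "finite T" "x \<notin> T" "y \<notin> T" "idx x \<noteq> idx y"
  shows "count_below idx (insert y T) x + count_below idx (insert x T) y =
    Suc (count_below idx T x + count_below idx T y)"
  using assms by (auto simp: count_below_insert)

lemma bsign_eq_signed: "bsign idx S b M v = signed M (count_below idx S b) v"
  by (simp add: bsign_def signed_def count_below_def)

locale boolean_complex =
  fixes R :: "'r ring" and X :: "'b set" and idx :: "'b \<Rightarrow> nat"
    and G :: "'b set \<Rightarrow> ('r, 'm) module" and Gm :: "'b set \<Rightarrow> 'b set \<Rightarrow> 'm \<Rightarrow> 'm"
  assumes finite_X: "finite X"
    and module_G: "S \<subseteq> X \<Longrightarrow> module R (G S)"
    and Gm_closed: "S \<subseteq> X \<Longrightarrow> x \<in> X - S \<Longrightarrow> u \<in> carrier (G (insert x S))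
        \<Longrightarrow> Gm (insert x S) S u \<in> carrier (G S)"
    and Gm_add: "S \<subseteq> X \<Longrightarrow> x \<in> X - S \<Longrightarrow> u \<in> carrier (G (insert x S))
        \<Longrightarrow> v \<in> carrier (G (insert x S))
        \<Longrightarrow> Gm (insert x S) S (u \<oplus>\<^bsub>G (insert x S)\<^esub> v) = Gm (insert x S) S u \<oplus>\<^bsub>G S\<^esub> Gm (insert x S) S v"
    and Gm_smult: "S \<subseteq> X \<Longrightarrow> x \<in> X - S \<Longrightarrow> r \<in> carrier R \<Longrightarrow> u \<in> carrier (G (insert x S))
        \<Longrightarrow> Gm (insert x S) S (r \<odot>\<^bsub>G (insert x S)\<^esub> u) = r \<odot>\<^bsub>G S\<^esub> Gm (insert x S) S u"
begin

abbreviation "diff k \<equiv> bdiff X idx G Gm k"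
abbreviation "bounds k \<equiv> bbounds X idx G Gm k"
abbreviation "cycles k \<equiv> bcycles X idx G Gm k"
abbreviation "hclass k \<equiv> bcoset X idx G Gm k"

lemma abelian_group_G: "S \<subseteq> X \<Longrightarrow> abelian_group (G S)"
  using module_G module.axioms(2) by blast

lemma abelian_monoid_G: "S \<subseteq> X \<Longrightarrow> abelian_monoid (G S)"
  using abelian_group_G abelian_group.axioms(1) by blast

lemma insert_index:
  "S \<subseteq> X \<Longrightarrow> card S = k \<Longrightarrow> x \<in> X - S \<Longrightarrow> insert x S \<subseteq> X \<and> card (insert x S) = Suc k"
  using finite_subset[OF _ finite_X] by auto

lemma Gm_hom:
  "S \<subseteq> X \<Longrightarrow> x \<in> X - S \<Longrightarrow> abelian_group_hom (G (insert x S)) (G S) (Gm (insert x S) S)"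
  by (intro abelian_group_hom_additiveI abelian_group_G Gm_closed Gm_add) auto

definition chain_group :: "nat \<Rightarrow> ('b set \<Rightarrow> 'm) ring" where
  "chain_group k = \<lparr>carrier = bchains X G k, mult = (\<lambda>_ _. undefined), one = undefined,
     zero = bzero X G k, add = badd X G k\<rparr>"

lemma chain_group_simps [simp]:
  "carrier (chain_group k) = bchains X G k" "zero (chain_group k) = bzero X G k"
  "add (chain_group k) = badd X G k"
  by (simp_all add: chain_group_def)

lemma chainsD: "c \<in> bchains X G k \<Longrightarrow> S \<subseteq> X \<Longrightarrow> card S = k \<Longrightarrow> c S \<in> carrier (G S)"
  by (simp add: bchains_def)

lemma chains_undefined: "c \<in> bchains X G k \<Longrightarrow> \<not> (S \<subseteq> X \<and> card S = k) \<Longrightarrow> c S = undefined"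
  by (simp add: bchains_def)

lemma chainsI:
  "(\<And>S. S \<subseteq> X \<Longrightarrow> card S = k \<Longrightarrow> c S \<in> carrier (G S)) \<Longrightarrow>
   (\<And>S. \<not> (S \<subseteq> X \<and> card S = k) \<Longrightarrow> c S = undefined) \<Longrightarrow> c \<in> bchains X G k"
  by (simp add: bchains_def)

lemma chains_eqI:
  "c \<in> bchains X G k \<Longrightarrow> c' \<in> bchains X G k \<Longrightarrow>
   (\<And>S. S \<subseteq> X \<Longrightarrow> card S = k \<Longrightarrow> c S = c' S) \<Longrightarrow> c = c'"
  by (rule ext) (metis chains_undefined)

lemma badd_closed: "c \<in> bchains X G k \<Longrightarrow> c' \<in> bchains X G k \<Longrightarrow> badd X G k c c' \<in> bchains X G k"
  by (rule chainsI) (auto simp: badd_def chainsD abelian_monoid.a_closed[OF abelian_monoid_G])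

lemma bzero_closed: "bzero X G k \<in> bchains X G k"
  by (rule chainsI) (auto simp: bzero_def abelian_monoid.zero_closed[OF abelian_monoid_G])

lemma bsmult_closed: "r \<in> carrier R \<Longrightarrow> c \<in> bchains X G k \<Longrightarrow> bsmult X G k r c \<in> bchains X G k"
  by (rule chainsI) (auto simp: bsmult_def chainsD module.smult_closed[OF module_G])

lemma abelian_group_chain_group: "abelian_group (chain_group k)"
proof (rule abelian_groupI)
  fix x y z assume xyz: "x \<in> carrier (chain_group k)" "y \<in> carrier (chain_group k)" "z \<in> carrier (chain_group k)"
  then show "x \<oplus>\<^bsub>chain_group k\<^esub> y \<in> carrier (chain_group k)" by (simp add: badd_closed)
  show "x \<oplus>\<^bsub>chain_group k\<^esub> y \<oplus>\<^bsub>chain_group k\<^esub> z = x \<oplus>\<^bsub>chain_group k\<^esub> (y \<oplus>\<^bsub>chain_group k\<^esub> z)"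
    using xyz unfolding chain_group_simps badd_def
    by (intro ext) (simp add: chainsD abelian_monoid.a_closed[OF abelian_monoid_G] abelian_monoid.a_assoc[OF abelian_monoid_G])
  show "x \<oplus>\<^bsub>chain_group k\<^esub> y = y \<oplus>\<^bsub>chain_group k\<^esub> x"
    using xyz unfolding chain_group_simps badd_def
    by (intro ext) (simp add: chainsD abelian_monoid.a_comm[OF abelian_monoid_G])
next
  show "\<zero>\<^bsub>chain_group k\<^esub> \<in> carrier (chain_group k)" by (simp add: bzero_closed)
next
  fix x assume x: "x \<in> carrier (chain_group k)"
  show "\<zero>\<^bsub>chain_group k\<^esub> \<oplus>\<^bsub>chain_group k\<^esub> x = x"
  proof (rule ext)
    fix S
    show "(\<zero>\<^bsub>chain_group k\<^esub> \<oplus>\<^bsub>chain_group k\<^esub> x) S = x S"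
      using x by (cases "S \<subseteq> X \<and> card S = k")
        (simp_all add: badd_def bzero_def chainsD abelian_monoid.l_zero[OF abelian_monoid_G],
         simp add: chains_undefined)
  qed
  define y where "y S = (if S \<subseteq> X \<and> card S = k then \<ominus>\<^bsub>G S\<^esub> x S else undefined)" for S
  have "y \<in> bchains X G k"
    using x by (intro chainsI) (auto simp: y_def chainsD abelian_group.a_inv_closed[OF abelian_group_G])
  moreover have "badd X G k y x = bzero X G k"
    using x by (intro ext) (simp add: y_def badd_def bzero_def chainsD abelian_group.l_neg[OF abelian_group_G])
  ultimately show "\<exists>y\<in>carrier (chain_group k). y \<oplus>\<^bsub>chain_group k\<^esub> x = \<zero>\<^bsub>chain_group k\<^esub>"
    by auto
qed

definition face_term :: "('b set \<Rightarrow> 'm) \<Rightarrow> 'b set \<Rightarrow> 'b \<Rightarrow> 'm" where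
  "face_term c S x = signed (G S) (count_below idx S x) (Gm (insert x S) S (c (insert x S)))"

lemma diff_eq: "S \<subseteq> X \<Longrightarrow> card S = k \<Longrightarrow> diff (Suc k) c S = finsum (G S) (face_term c S) (X - S)"
  unfolding bdiff_def face_term_def[abs_def] bsign_eq_signed by simp

lemma diff_undefined: "\<not> (S \<subseteq> X \<and> card S = k) \<Longrightarrow> diff (Suc k) c S = undefined"
  by (auto simp: bdiff_def)

lemma face_term_closed:
  "c \<in> bchains X G (Suc k) \<Longrightarrow> S \<subseteq> X \<Longrightarrow> card S = k \<Longrightarrow> face_term c S \<in> X - S \<rightarrow> carrier (G S)"
proof
  fix x assume "c \<in> bchains X G (Suc k)" "S \<subseteq> X" "card S = k" "x \<in> X - S"
  then show "face_term c S x \<in> carrier (G S)"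
    unfolding face_term_def using insert_index
    by (intro abelian_group.signed_closed[OF abelian_group_G] Gm_closed chainsD) auto
qed

lemma face_term_zero:
  "S \<subseteq> X \<Longrightarrow> x \<in> X - S \<Longrightarrow> c (insert x S) = \<zero>\<^bsub>G (insert x S)\<^esub> \<Longrightarrow> face_term c S x = \<zero>\<^bsub>G S\<^esub>"
proof -
  assume S: "S \<subseteq> X" "x \<in> X - S" and c: "c (insert x S) = \<zero>\<^bsub>G (insert x S)\<^esub>"
  have "Gm (insert x S) S (c (insert x S)) = \<zero>\<^bsub>G S\<^esub>"
    unfolding c by (rule abelian_group_hom.hom_zero[OF Gm_hom[OF S]])
  then show ?thesis
    unfolding face_term_def using abelian_group.signed_zero[OF abelian_group_G[OF S(1)]] by simp
qed

lemma diff_remove: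
  "c \<in> bchains X G (Suc k) \<Longrightarrow> S \<subseteq> X \<Longrightarrow> card S = k \<Longrightarrow> x \<in> X - S \<Longrightarrow>
   diff (Suc k) c S = face_term c S x \<oplus>\<^bsub>G S\<^esub> finsum (G S) (face_term c S) (X - S - {x})"
  by (simp only: diff_eq) (intro abelian_group.finsum_remove abelian_group_G face_term_closed; use finite_X in auto)

lemma diff_closed: "c \<in> bchains X G (Suc k) \<Longrightarrow> diff (Suc k) c \<in> bchains X G k"
  by (rule chainsI) (auto simp: diff_eq diff_undefined face_term_closed
      abelian_monoid.finsum_closed[OF abelian_monoid_G])

lemma face_term_badd:
  assumes "c \<in> bchains X G (Suc k)" "c' \<in> bchains X G (Suc k)" "S \<subseteq> X" "card S = k" "x \<in> X - S"
  shows "face_term (badd X G (Suc k) c c') S x = face_term c S x \<oplus>\<^bsub>G S\<^esub> face_term c' S x"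
proof -
  interpret M: abelian_group "G S" using abelian_group_G assms(3) by blast
  have i: "insert x S \<subseteq> X" "card (insert x S) = Suc k" using insert_index assms(3-5) by auto
  show ?thesis
    using i assms Gm_add Gm_closed chainsD by (simp add: face_term_def badd_def M.signed_add)
qed

lemma face_term_bsmult:
  assumes "r \<in> carrier R" "c \<in> bchains X G (Suc k)" "S \<subseteq> X" "card S = k" "x \<in> X - S"
  shows "face_term (bsmult X G (Suc k) r c) S x = r \<odot>\<^bsub>G S\<^esub> face_term c S x"
proof -
  interpret M: module R "G S" using module_G assms(3) by blast
  have i: "insert x S \<subseteq> X" "card (insert x S) = Suc k" using insert_index assms(3-5) by auto
  show ?thesis
    using i assms Gm_smult Gm_closed chainsD by (simp add: face_term_def bsmult_def M.signed_smult)
qed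

lemma diff_add:
  assumes c: "c \<in> bchains X G (Suc k)" and c': "c' \<in> bchains X G (Suc k)"
  shows "diff (Suc k) (badd X G (Suc k) c c') = badd X G k (diff (Suc k) c) (diff (Suc k) c')"
proof (rule ext)
  fix S
  show "diff (Suc k) (badd X G (Suc k) c c') S = badd X G k (diff (Suc k) c) (diff (Suc k) c') S"
  proof (cases "S \<subseteq> X \<and> card S = k")
    case True
    interpret M: abelian_group "G S" using abelian_group_G True by blast
    have "finsum (G S) (face_term (badd X G (Suc k) c c') S) (X - S) =
        finsum (G S) (\<lambda>x. face_term c S x \<oplus>\<^bsub>G S\<^esub> face_term c' S x) (X - S)"
      using True face_term_closed[OF c] face_term_closed[OF c'] face_term_badd[OF c c']
      by (intro M.finsum_cong') (auto intro!: M.a_closed)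
    also have "\<dots> = finsum (G S) (face_term c S) (X - S) \<oplus>\<^bsub>G S\<^esub> finsum (G S) (face_term c' S) (X - S)"
      using True face_term_closed[OF c] face_term_closed[OF c'] by (intro M.finsum_addf) auto
    finally show ?thesis using True by (simp add: diff_eq badd_def)
  qed (auto simp: diff_undefined badd_def)
qed

lemma diff_smult:
  assumes r: "r \<in> carrier R" and c: "c \<in> bchains X G (Suc k)"
  shows "diff (Suc k) (bsmult X G (Suc k) r c) = bsmult X G k r (diff (Suc k) c)"
proof (rule ext)
  fix S
  show "diff (Suc k) (bsmult X G (Suc k) r c) S = bsmult X G k r (diff (Suc k) c) S"
  proof (cases "S \<subseteq> X \<and> card S = k")
    case True
    interpret M: module R "G S" using module_G True by blast
    have "finsum (G S) (face_term (bsmult X G (Suc k) r c) S) (X - S) =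
        finsum (G S) (\<lambda>x. r \<odot>\<^bsub>G S\<^esub> face_term c S x) (X - S)"
      using True r face_term_closed[OF c] face_term_bsmult[OF r c] by (intro M.finsum_cong') auto
    also have "\<dots> = r \<odot>\<^bsub>G S\<^esub> finsum (G S) (face_term c S) (X - S)"
      using True r face_term_closed[OF c] finite_X by (intro M.finsum_smult_ldistr[symmetric]) auto
    finally show ?thesis using True by (simp add: diff_eq bsmult_def)
  qed (auto simp: diff_undefined bsmult_def)
qed

lemma diff_hom: "abelian_group_hom (chain_group (Suc k)) (chain_group k) (diff (Suc k))"
  by (intro abelian_group_hom_additiveI abelian_group_chain_group) (simp_all add: diff_closed diff_add)

lemma diff_bzero: "diff (Suc k) (bzero X G (Suc k)) = bzero X G k"
  using abelian_group_hom.hom_zero[OF diff_hom] by simp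

lemma diff_eq_face_term:
  assumes "c \<in> bchains X G (Suc k)" "S \<subseteq> X" "card S = k" "y \<in> X - S"
    and "\<And>x. x \<in> X - S - {y} \<Longrightarrow> face_term c S x = \<zero>\<^bsub>G S\<^esub>"
  shows "diff (Suc k) c S = face_term c S y"
proof -
  interpret M: abelian_group "G S" using abelian_group_G assms(2) by blast
  have "finsum (G S) (face_term c S) (X - S - {y}) = finsum (G S) (\<lambda>_. \<zero>\<^bsub>G S\<^esub>) (X - S - {y})"
    using assms(5) by (intro M.finsum_cong') auto
  then have "finsum (G S) (face_term c S) (X - S - {y}) = \<zero>\<^bsub>G S\<^esub>" by simp
  then show ?thesis
    using diff_remove[OF assms(1-4)] face_term_closed[OF assms(1-3)] assms(4) by (auto intro: M.r_zero)
qed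

lemma diff_eq_zero:
  assumes "S \<subseteq> X" "card S = k" "\<And>x. x \<in> X - S \<Longrightarrow> face_term c S x = \<zero>\<^bsub>G S\<^esub>"
  shows "diff (Suc k) c S = \<zero>\<^bsub>G S\<^esub>"
proof -
  interpret M: abelian_group "G S" using abelian_group_G assms(1) by blast
  have "finsum (G S) (face_term c S) (X - S) = finsum (G S) (\<lambda>_. \<zero>\<^bsub>G S\<^esub>) (X - S)"
    using assms(3) by (intro M.finsum_cong') auto
  then show ?thesis using assms(1,2) by (simp add: diff_eq)
qed

lemma bounds_subset: "bounds k \<subseteq> bchains X G k"
  unfolding bbounds_def using diff_closed by blast

lemma bzero_bounds: "bzero X G k \<in> bounds k"
  unfolding bbounds_def using diff_bzero bzero_closed by (metis image_eqI)

lemma badd_bounds: "x \<in> bounds k \<Longrightarrow> y \<in> bounds k \<Longrightarrow> badd X G k x y \<in> bounds k"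
proof -
  assume "x \<in> bounds k" "y \<in> bounds k"
  then obtain x' y' where "x' \<in> bchains X G (Suc k)" "x = diff (Suc k) x'"
    "y' \<in> bchains X G (Suc k)" "y = diff (Suc k) y'"
    unfolding bbounds_def by auto
  then show ?thesis unfolding bbounds_def
    by (intro image_eqI[where x = "badd X G (Suc k) x' y'"]) (simp_all add: diff_add badd_closed)
qed

lemma neg_bounds: "x \<in> bounds k \<Longrightarrow> \<ominus>\<^bsub>chain_group k\<^esub> x \<in> bounds k"
proof -
  assume "x \<in> bounds k"
  then obtain y where y: "y \<in> bchains X G (Suc k)" "x = diff (Suc k) y" unfolding bbounds_def by auto
  interpret d: abelian_group_hom "chain_group (Suc k)" "chain_group k" "diff (Suc k)" by (rule diff_hom)
  show ?thesis unfolding bbounds_def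
    by (intro image_eqI[where x = "\<ominus>\<^bsub>chain_group (Suc k)\<^esub> y"]) (use y d.G.a_inv_closed in simp_all)
qed

lemma bsmult_bounds: "r \<in> carrier R \<Longrightarrow> x \<in> bounds k \<Longrightarrow> bsmult X G k r x \<in> bounds k"
proof -
  assume r: "r \<in> carrier R" and "x \<in> bounds k"
  then obtain x' where "x' \<in> bchains X G (Suc k)" "x = diff (Suc k) x'"
    unfolding bbounds_def by auto
  then show ?thesis unfolding bbounds_def
    by (intro image_eqI[where x = "bsmult X G (Suc k) r x'"]) (simp_all add: diff_smult bsmult_closed r)
qed

lemma cycles_subset: "cycles k \<subseteq> bchains X G k"
  unfolding bcycles_def by auto

lemma minus_cycles: "x \<in> cycles k \<Longrightarrow> y \<in> cycles k \<Longrightarrow> x \<ominus>\<^bsub>chain_group k\<^esub> y \<in> cycles k"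
proof (cases k)
  case (Suc j)
  assume x: "x \<in> cycles k" and y: "y \<in> cycles k"
  interpret d: abelian_group_hom "chain_group (Suc j)" "chain_group j" "diff (Suc j)" by (rule diff_hom)
  have "diff (Suc j) (x \<ominus>\<^bsub>chain_group k\<^esub> y) = bzero X G j"
    using x y Suc d.H.r_neg[of "\<zero>\<^bsub>chain_group j\<^esub>"] bzero_closed
    by (simp add: bcycles_def a_minus_def d.hom_add[simplified] d.G.a_inv_closed[simplified])
  then show ?thesis
    using x y Suc abelian_group.minus_closed[OF abelian_group_chain_group] by (simp add: bcycles_def)
qed (use abelian_group.minus_closed[OF abelian_group_chain_group] in \<open>auto simp: bcycles_def\<close>)

lemma badd_assoc:
  assumes "x \<in> bchains X G k" "y \<in> bchains X G k" "z \<in> bchains X G k"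
  shows "badd X G k (badd X G k x y) z = badd X G k x (badd X G k y z)"
proof -
  interpret A: abelian_group "chain_group k" by (rule abelian_group_chain_group)
  show ?thesis using assms A.a_assoc[of x y z] by simp
qed

lemma badd_bounds_image: "b \<in> bounds k \<Longrightarrow> badd X G k b ` bounds k = bounds k"
proof
  assume b: "b \<in> bounds k"
  interpret A: abelian_group "chain_group k" by (rule abelian_group_chain_group)
  show "badd X G k b ` bounds k \<subseteq> bounds k" using b badd_bounds by auto
  show "bounds k \<subseteq> badd X G k b ` bounds k"
  proof
    fix y assume y: "y \<in> bounds k"
    have bc: "b \<in> bchains X G k" "y \<in> bchains X G k" using b y bounds_subset by auto
    have "badd X G k b (badd X G k (\<ominus>\<^bsub>chain_group k\<^esub> b) y) =
        badd X G k (badd X G k b (\<ominus>\<^bsub>chain_group k\<^esub> b)) y"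
      using bc A.a_inv_closed[of b] by (simp add: badd_assoc)
    also have "\<dots> = y" using bc A.r_neg[of b] A.l_zero[of y] by simp
    finally show "y \<in> badd X G k b ` bounds k"
      using b y badd_bounds neg_bounds by (metis image_eqI)
  qed
qed

lemma hclass_shift: "x \<in> bchains X G k \<Longrightarrow> b \<in> bounds k \<Longrightarrow> hclass k (badd X G k x b) = hclass k x"
proof -
  assume x: "x \<in> bchains X G k" and b: "b \<in> bounds k"
  have "badd X G k (badd X G k x b) ` bounds k = badd X G k x ` badd X G k b ` bounds k"
    unfolding image_image using x b bounds_subset by (intro image_cong) (auto intro!: badd_assoc)
  then show ?thesis unfolding bcoset_def badd_bounds_image[OF b] .
qed

lemma hclass_self: "x \<in> bchains X G k \<Longrightarrow> x \<in> hclass k x"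
proof -
  assume x: "x \<in> bchains X G k"
  interpret A: abelian_group "chain_group k" by (rule abelian_group_chain_group)
  have "badd X G k x (bzero X G k) = x" using x A.r_zero by simp
  then show ?thesis unfolding bcoset_def using bzero_bounds by (metis image_eqI)
qed

lemma hclass_some: "x \<in> bchains X G k \<Longrightarrow> \<exists>b\<in>bounds k. (SOME y. y \<in> hclass k x) = badd X G k x b"
proof -
  assume "x \<in> bchains X G k"
  then have "(SOME y. y \<in> hclass k x) \<in> hclass k x" using hclass_self by (metis someI)
  then show ?thesis unfolding bcoset_def by blast
qed

lemma hclass_eq_iff:
  assumes x: "x \<in> bchains X G k" and y: "y \<in> bchains X G k"
  shows "hclass k x = hclass k y \<longleftrightarrow> x \<ominus>\<^bsub>chain_group k\<^esub> y \<in> bounds k"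
proof
  interpret A: abelian_group "chain_group k" by (rule abelian_group_chain_group)
  assume "hclass k x = hclass k y"
  then obtain b where b: "b \<in> bounds k" "x = badd X G k y b"
    using hclass_self[OF x] unfolding bcoset_def by auto
  have "b \<in> carrier (chain_group k)" using b bounds_subset by auto
  then have "x \<ominus>\<^bsub>chain_group k\<^esub> y = b"
    using y A.r_neg1[of y b] A.a_comm[of "\<ominus>\<^bsub>chain_group k\<^esub> y" "badd X G k y b"]
      badd_closed[OF y, of b] A.a_inv_closed[of y] unfolding b(2) a_minus_def
    by simp
  then show "x \<ominus>\<^bsub>chain_group k\<^esub> y \<in> bounds k" using b by simp
next
  interpret A: abelian_group "chain_group k" by (rule abelian_group_chain_group)
  assume d: "x \<ominus>\<^bsub>chain_group k\<^esub> y \<in> bounds k"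
  have "badd X G k y (x \<ominus>\<^bsub>chain_group k\<^esub> y) = x"
    using x y A.r_neg2[of y x] A.a_comm[of x "\<ominus>\<^bsub>chain_group k\<^esub> y"] A.a_inv_closed[of y]
    unfolding a_minus_def by simp
  then show "hclass k x = hclass k y" using hclass_shift[OF y d] by simp
qed

lemma HC_carrier: "carrier (HC X idx G Gm k) = hclass k ` cycles k"
  by (simp add: HC_def)

lemma HC_add_hclass:
  assumes x: "x \<in> bchains X G k" and y: "y \<in> bchains X G k"
  shows "hclass k x \<oplus>\<^bsub>HC X idx G Gm k\<^esub> hclass k y = hclass k (badd X G k x y)"
proof -
  obtain b1 where b1: "b1 \<in> bounds k" "(SOME p. p \<in> hclass k x) = badd X G k x b1"
    using hclass_some[OF x] by blast
  obtain b2 where b2: "b2 \<in> bounds k" "(SOME p. p \<in> hclass k y) = badd X G k y b2"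
    using hclass_some[OF y] by blast
  have c: "b1 \<in> bchains X G k" "b2 \<in> bchains X G k" using b1 b2 bounds_subset by auto
  have "badd X G k (badd X G k x b1) (badd X G k y b2) = badd X G k (badd X G k x y) (badd X G k b1 b2)"
    unfolding badd_def using x y c
    by (intro ext) (auto simp: chainsD abelian_monoid.a_ac[OF abelian_monoid_G] abelian_monoid.a_closed[OF abelian_monoid_G])
  then show ?thesis
    using b1 b2 hclass_shift[where x = "badd X G k x y" and b = "badd X G k b1 b2"] badd_bounds x y badd_closed
    by (simp add: HC_def)
qed

lemma HC_smult_hclass:
  assumes r: "r \<in> carrier R" and x: "x \<in> bchains X G k"
  shows "r \<odot>\<^bsub>HC X idx G Gm k\<^esub> hclass k x = hclass k (bsmult X G k r x)"
proof -
  obtain b where b: "b \<in> bounds k" "(SOME p. p \<in> hclass k x) = badd X G k x b"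
    using hclass_some[OF x] by blast
  have c: "b \<in> bchains X G k" using b bounds_subset by auto
  have "bsmult X G k r (badd X G k x b) = badd X G k (bsmult X G k r x) (bsmult X G k r b)"
  proof (rule ext)
    fix S show "bsmult X G k r (badd X G k x b) S = badd X G k (bsmult X G k r x) (bsmult X G k r b) S"
      using module.smult_r_distr[OF module_G r chainsD[OF x] chainsD[OF c]]
      by (cases "S \<subseteq> X \<and> card S = k") (auto simp: bsmult_def badd_def)
  qed
  then show ?thesis
    using b hclass_shift[where x = "bsmult X G k r x" and b = "bsmult X G k r b"] bsmult_bounds[OF r b(1)] bsmult_closed[OF r x]
    by (simp add: HC_def)
qed

end

section \<open>Chain retractions\<close>

locale chain_retraction =
  C: boolean_complex R X idx G Gm + C': boolean_complex R X' idx' G' Gm'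
  for R :: "'r ring" and X :: "'b set" and idx and G :: "'b set \<Rightarrow> ('r, 'm) module" and Gm
    and X' :: "'c set" and idx' and G' :: "'c set \<Rightarrow> ('r, 'n) module" and Gm' +
  fixes p :: "nat \<Rightarrow> ('b set \<Rightarrow> 'm) \<Rightarrow> 'c set \<Rightarrow> 'n"
    and i :: "nat \<Rightarrow> ('c set \<Rightarrow> 'n) \<Rightarrow> 'b set \<Rightarrow> 'm"
  assumes p_closed: "c \<in> bchains X G k \<Longrightarrow> p k c \<in> bchains X' G' k"
    and p_add: "c \<in> bchains X G k \<Longrightarrow> c' \<in> bchains X G k \<Longrightarrow>
      p k (badd X G k c c') = badd X' G' k (p k c) (p k c')"
    and p_smult: "r \<in> carrier R \<Longrightarrow> c \<in> bchains X G k \<Longrightarrow>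
      p k (bsmult X G k r c) = bsmult X' G' k r (p k c)"
    and p_diff: "c \<in> bchains X G (Suc k) \<Longrightarrow> p k (C.diff (Suc k) c) = C'.diff (Suc k) (p (Suc k) c)"
    and i_closed: "e \<in> bchains X' G' k \<Longrightarrow> i k e \<in> bchains X G k"
    and i_bzero: "i k (bzero X' G' k) = bzero X G k"
    and i_diff: "e \<in> bchains X' G' (Suc k) \<Longrightarrow> i k (C'.diff (Suc k) e) = C.diff (Suc k) (i (Suc k) e)"
    and p_i: "e \<in> bchains X' G' k \<Longrightarrow> p k (i k e) = e"
    and cycle_homotopy: "c \<in> C.cycles k \<Longrightarrow>
      \<exists>h \<in> bchains X G (Suc k). c = badd X G k (i k (p k c)) (C.diff (Suc k) h)"
begin

lemma p_hom: "abelian_group_hom (C.chain_group k) (C'.chain_group k) (p k)"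
  by (intro abelian_group_hom_additiveI C.abelian_group_chain_group C'.abelian_group_chain_group)
     (simp_all add: p_closed p_add)

lemma p_bounds: "c \<in> C.bounds k \<Longrightarrow> p k c \<in> C'.bounds k"
  unfolding bbounds_def using p_diff p_closed by auto

lemma p_cycles: "c \<in> C.cycles k \<Longrightarrow> p k c \<in> C'.cycles k"
  using p_closed abelian_group_hom.hom_zero[OF p_hom] by (cases k) (auto simp: bcycles_def p_diff[symmetric])

lemma i_cycles: "c \<in> C'.cycles k \<Longrightarrow> i k c \<in> C.cycles k"
  using i_closed by (cases k) (auto simp: bcycles_def i_diff[symmetric] i_bzero)

lemma p_reflects_bounds:
  assumes c: "c \<in> C.cycles k" and pc: "p k c \<in> C'.bounds k"
  shows "c \<in> C.bounds k"
proof -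
  obtain y where y: "y \<in> bchains X' G' (Suc k)" "p k c = C'.diff (Suc k) y"
    using pc by (auto simp: bbounds_def)
  obtain h where h: "h \<in> bchains X G (Suc k)" "c = badd X G k (i k (p k c)) (C.diff (Suc k) h)"
    using cycle_homotopy[OF c] by blast
  have iy: "i (Suc k) y \<in> bchains X G (Suc k)" using i_closed y by blast
  have "c = C.diff (Suc k) (badd X G (Suc k) (i (Suc k) y) h)"
    using h y iy by (simp add: i_diff C.diff_add)
  then show ?thesis using C.badd_closed[OF iy h(1)] unfolding bbounds_def by blast
qed

definition induced :: "nat \<Rightarrow> ('b set \<Rightarrow> 'm) set \<Rightarrow> ('c set \<Rightarrow> 'n) set" where
  "induced k P = C'.hclass k (p k (SOME c. c \<in> P))"

lemma induced_hclass: "c \<in> bchains X G k \<Longrightarrow> induced k (C.hclass k c) = C'.hclass k (p k c)"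
proof -
  assume c: "c \<in> bchains X G k"
  then obtain b where b: "b \<in> C.bounds k" "(SOME y. y \<in> C.hclass k c) = badd X G k c b"
    using C.hclass_some by blast
  then have "induced k (C.hclass k c) = C'.hclass k (badd X' G' k (p k c) (p k b))"
    unfolding induced_def using c b(1) by (simp add: p_add subsetD[OF C.bounds_subset])
  also have "\<dots> = C'.hclass k (p k c)"
    using b c p_closed p_bounds by (intro C'.hclass_shift) auto
  finally show ?thesis .
qed

lemma bij_betw_induced: "bij_betw (induced k) (carrier (HC X idx G Gm k)) (carrier (HC X' idx' G' Gm' k))"
  unfolding bij_betw_def C.HC_carrier C'.HC_carrier
proof
  interpret p: abelian_group_hom "C.chain_group k" "C'.chain_group k" "p k" by (rule p_hom)
  show "inj_on (induced k) (C.hclass k ` C.cycles k)"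
  proof (rule inj_onI)
    fix P Q assume "P \<in> C.hclass k ` C.cycles k" "Q \<in> C.hclass k ` C.cycles k"
      and PQ: "induced k P = induced k Q"
    then obtain z1 z2 where z: "z1 \<in> C.cycles k" "z2 \<in> C.cycles k"
      and P: "P = C.hclass k z1" and Q: "Q = C.hclass k z2" by blast
    then have "C'.hclass k (p k z1) = C'.hclass k (p k z2)"
      using PQ C.cycles_subset induced_hclass by (metis subsetD)
    moreover have zc: "z1 \<in> bchains X G k" "z2 \<in> bchains X G k" using z C.cycles_subset by auto
    ultimately have "p k z1 \<ominus>\<^bsub>C'.chain_group k\<^esub> p k z2 \<in> C'.bounds k"
      using p_closed C'.hclass_eq_iff by blast
    moreover have "p k (z1 \<ominus>\<^bsub>C.chain_group k\<^esub> z2) = p k z1 \<ominus>\<^bsub>C'.chain_group k\<^esub> p k z2"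
      using zc p.hom_a_inv[of z2] p.G.a_inv_closed[of z2] by (simp add: a_minus_def p_add)
    ultimately have "p k (z1 \<ominus>\<^bsub>C.chain_group k\<^esub> z2) \<in> C'.bounds k" by simp
    then show "P = Q"
      unfolding P Q using z C.cycles_subset C.minus_cycles p_reflects_bounds C.hclass_eq_iff by blast
  qed
  show "induced k ` C.hclass k ` C.cycles k = C'.hclass k ` C'.cycles k"
  proof (intro equalityI subsetI)
    fix P assume "P \<in> induced k ` C.hclass k ` C.cycles k"
    then obtain c where "c \<in> C.cycles k" "P = induced k (C.hclass k c)" by blast
    then show "P \<in> C'.hclass k ` C'.cycles k"
      using C.cycles_subset induced_hclass p_cycles by (metis image_eqI subsetD)
  next
    fix P assume "P \<in> C'.hclass k ` C'.cycles k"
    then obtain c where c: "c \<in> C'.cycles k" "P = C'.hclass k c" by blast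
    moreover have "c \<in> bchains X' G' k" using c C'.cycles_subset by blast
    ultimately have "P = induced k (C.hclass k (i k c))"
      by (simp add: induced_hclass i_closed p_i)
    then show "P \<in> induced k ` C.hclass k ` C.cycles k" using c i_cycles by blast
  qed
qed

theorem HC_isomorphic: "mod_isomorphic R (HC X idx G Gm k) (HC X' idx' G' Gm' k)"
  unfolding mod_isomorphic_def
proof (intro exI conjI ballI)
  show "bij_betw (induced k) (carrier (HC X idx G Gm k)) (carrier (HC X' idx' G' Gm' k))"
    by (rule bij_betw_induced)
  fix P assume "P \<in> carrier (HC X idx G Gm k)"
  then obtain x where x: "x \<in> bchains X G k" "P = C.hclass k x"
    using C.HC_carrier C.cycles_subset by blast
  fix Q assume "Q \<in> carrier (HC X idx G Gm k)"
  then obtain y where y: "y \<in> bchains X G k" "Q = C.hclass k y"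
    using C.HC_carrier C.cycles_subset by blast
  show "induced k (P \<oplus>\<^bsub>HC X idx G Gm k\<^esub> Q) = induced k P \<oplus>\<^bsub>HC X' idx' G' Gm' k\<^esub> induced k Q"
    using x y by (simp add: C.HC_add_hclass C'.HC_add_hclass induced_hclass C.badd_closed p_closed p_add)
next
  fix r P assume r: "r \<in> carrier R" and "P \<in> carrier (HC X idx G Gm k)"
  then obtain x where x: "x \<in> bchains X G k" "P = C.hclass k x"
    using C.HC_carrier C.cycles_subset by blast
  show "induced k (r \<odot>\<^bsub>HC X idx G Gm k\<^esub> P) = r \<odot>\<^bsub>HC X' idx' G' Gm' k\<^esub> induced k P"
    using x r by (simp add: C.HC_smult_hclass C'.HC_smult_hclass induced_hclass C.bsmult_closed p_closed p_smult)
qed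

end

section \<open>Coefficients pulled back along a map of atoms\<close>

locale restriction_system =
  fixes R :: "'r ring" and Y :: "'c set" and H :: "'c set \<Rightarrow> ('r, 'm) module"
    and Hm :: "'c set \<Rightarrow> 'c set \<Rightarrow> 'm \<Rightarrow> 'm"
  assumes module_H: "U \<subseteq> Y \<Longrightarrow> module R (H U)"
    and Hm_closed: "V \<subseteq> U \<Longrightarrow> U \<subseteq> Y \<Longrightarrow> u \<in> carrier (H U) \<Longrightarrow> Hm U V u \<in> carrier (H V)"
    and Hm_add: "V \<subseteq> U \<Longrightarrow> U \<subseteq> Y \<Longrightarrow> u \<in> carrier (H U) \<Longrightarrow> v \<in> carrier (H U) \<Longrightarrow>
        Hm U V (u \<oplus>\<^bsub>H U\<^esub> v) = Hm U V u \<oplus>\<^bsub>H V\<^esub> Hm U V v"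
    and Hm_smult: "V \<subseteq> U \<Longrightarrow> U \<subseteq> Y \<Longrightarrow> r \<in> carrier R \<Longrightarrow> u \<in> carrier (H U) \<Longrightarrow>
        Hm U V (r \<odot>\<^bsub>H U\<^esub> u) = r \<odot>\<^bsub>H V\<^esub> Hm U V u"
    and Hm_id: "U \<subseteq> Y \<Longrightarrow> u \<in> carrier (H U) \<Longrightarrow> Hm U U u = u"
begin

lemma boolean_complex_pullback:
  "finite X \<Longrightarrow> g ` X \<subseteq> Y \<Longrightarrow> boolean_complex R X (\<lambda>S. H (g ` S)) (\<lambda>T S. Hm (g ` T) (g ` S))"
  unfolding boolean_complex_def by (intro conjI allI impI) (auto intro!: module_H Hm_closed Hm_add Hm_smult)

lemma boolean_complex_self: "finite Y \<Longrightarrow> boolean_complex R Y H Hm"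
  unfolding boolean_complex_def by (intro conjI allI impI) (auto intro!: module_H Hm_closed Hm_add Hm_smult)

lemma abelian_group_H: "U \<subseteq> Y \<Longrightarrow> abelian_group (H U)"
  using module_H module.axioms(2) by blast

lemma Hm_hom: "V \<subseteq> U \<Longrightarrow> U \<subseteq> Y \<Longrightarrow> abelian_group_hom (H U) (H V) (Hm U V)"
  by (intro abelian_group_hom_additiveI abelian_group_H Hm_closed Hm_add) auto

lemma Hm_signed: "V \<subseteq> U \<Longrightarrow> U \<subseteq> Y \<Longrightarrow> u \<in> carrier (H U) \<Longrightarrow> Hm U V (signed (H U) n u) = signed (H V) n (Hm U V u)"
  by (rule abelian_group_hom.hom_signed[OF Hm_hom])

lemma signed_Hm_add_signed:
  assumes "V \<subseteq> U" "U \<subseteq> Y" "u \<in> carrier (H U)" "v \<in> carrier (H U)"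
  shows "signed (H V) n (Hm U V (u \<oplus>\<^bsub>H U\<^esub> signed (H U) m v)) =
    signed (H V) n (Hm U V u) \<oplus>\<^bsub>H V\<^esub> signed (H V) (n + m) (Hm U V v)"
proof -
  interpret U: abelian_group "H U" using abelian_group_H assms by blast
  interpret V: abelian_group "H V" using abelian_group_H assms by blast
  show ?thesis using assms Hm_closed by (simp add: Hm_add Hm_signed V.signed_add V.signed_signed)
qed

end

lemma restriction_system_sheaf:
  assumes sheaf: "is_sheaf R F res" and mono: "\<And>U V. V \<subseteq> U \<Longrightarrow> \<phi> V \<le> \<phi> U"
  shows "restriction_system R Y (\<lambda>U. F (\<phi> U)) (\<lambda>U V. res (\<phi> U) (\<phi> V))"
proof -
  note s = sheaf[unfolded is_sheaf_def]
  note restr = conjunct1[OF conjunct2[OF s], rule_format, OF mono]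
  show ?thesis
  proof (rule restriction_system.intro, goal_cases)
    case (1 U) show ?case using conjunct1[OF s] by blast
  next
    case (2 V U u) then show ?case using restr by blast
  next
    case (3 V U u v) then show ?case using restr by blast
  next
    case (4 V U r u) then show ?case using restr by blast
  next
    case (5 U u) then show ?case using conjunct1[OF conjunct2[OF conjunct2[OF s]]] by blast
  qed
qed

subsection \<open>Merging two atoms with the same image\<close>

locale collapse = restriction_system R Y H Hm
  for R :: "'r ring" and Y :: "'c set" and H :: "'c set \<Rightarrow> ('r, 'm) module" and Hm +
  fixes X :: "'b set" and idx :: "'b \<Rightarrow> nat" and g :: "'b \<Rightarrow> 'c" and b b' :: 'b
  assumes finite_X: "finite X" and inj_idx: "inj_on idx X" and g_X: "g ` X \<subseteq> Y"
    and b_X: "b \<in> X" and b'_X: "b' \<in> X" and b_b': "b \<noteq> b'" and g_b_b': "g b = g b'"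
begin

declare image_insert [simp del]

abbreviation "GG S \<equiv> H (g ` S)"
abbreviation "GGm T S \<equiv> Hm (g ` T) (g ` S)"
abbreviation "X' \<equiv> X - {b'}"

sublocale C: boolean_complex R X idx GG GGm
  by (rule boolean_complex_pullback) (use finite_X g_X in auto)

sublocale E: boolean_complex R X' idx GG GGm
  by (rule boolean_complex_pullback) (use finite_X g_X in auto)

lemma image_subset_Y: "S \<subseteq> X \<Longrightarrow> g ` S \<subseteq> Y"
  using g_X by blast

lemma image_insert_twin: "g ` insert b' A = g ` insert b A"
  by (simp add: g_b_b' image_insert)

lemma image_twin_swap: "b \<in> S \<Longrightarrow> g ` insert b' (S - {b}) = g ` S"
  unfolding image_insert_twin by (simp add: insert_absorb)

lemma image_insert_b': "b \<in> S \<Longrightarrow> g ` insert b' S = g ` S"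
  unfolding image_insert_twin by (simp add: insert_absorb)

lemma image_insert_b: "b' \<in> S \<Longrightarrow> g ` insert b S = g ` S"
  unfolding image_insert_twin[symmetric] by (simp add: insert_absorb)

lemma image_remove_b: "b' \<in> S \<Longrightarrow> g ` (S - {b}) = g ` S"
  using image_insert_b[of "S - {b}"] image_insert_b[of S] b_b' by simp

lemma card_twin_swap: "S \<subseteq> X' \<Longrightarrow> b \<in> S \<Longrightarrow> card (insert b' (S - {b})) = card S"
proof -
  assume S: "S \<subseteq> X'" "b \<in> S"
  then have "finite S" "b' \<notin> S - {b}" using finite_subset[OF _ finite_X] by auto
  then show ?thesis using S card_Suc_Diff1[of S b] by simp
qed

lemma twin_closed:
  "c \<in> bchains X GG k \<Longrightarrow> S \<subseteq> X' \<Longrightarrow> card S = k \<Longrightarrow> b \<in> S \<Longrightarrow>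
   c (insert b' (S - {b})) \<in> carrier (GG S)"
  using C.chainsD[of c k "insert b' (S - {b})"] b'_X card_twin_swap image_twin_swap by auto

definition twin_sign :: "'b set \<Rightarrow> nat" where
  "twin_sign T = count_below idx T b + count_below idx T b'"

text \<open>Merging b' into b: a cell S containing b collects, with a sign, the coefficient of its
  twin S - {b} + {b'}, which lives in the same module because g b = g b'.\<close>
definition merge :: "nat \<Rightarrow> ('b set \<Rightarrow> 'm) \<Rightarrow> 'b set \<Rightarrow> 'm" where
  "merge k c = (\<lambda>S. if S \<subseteq> X' \<and> card S = k then
      (if b \<in> S then c S \<oplus>\<^bsub>GG S\<^esub> signed (GG S) (twin_sign (S - {b})) (c (insert b' (S - {b}))) else c S)
      else undefined)"

definition extend :: "nat \<Rightarrow> ('b set \<Rightarrow> 'm) \<Rightarrow> 'b set \<Rightarrow> 'm" where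
  "extend k c = (\<lambda>S. if S \<subseteq> X \<and> card S = k then (if b' \<in> S then \<zero>\<^bsub>GG S\<^esub> else c S) else undefined)"

definition homotopy :: "nat \<Rightarrow> ('b set \<Rightarrow> 'm) \<Rightarrow> 'b set \<Rightarrow> 'm" where
  "homotopy k c = (\<lambda>S. if S \<subseteq> X \<and> card S = Suc k then
      (if b \<in> S \<and> b' \<in> S then signed (GG S) (count_below idx (S - {b}) b) (c (S - {b})) else \<zero>\<^bsub>GG S\<^esub>)
      else undefined)"

lemma merge_closed: "c \<in> bchains X GG k \<Longrightarrow> merge k c \<in> bchains X' GG k"
proof (rule E.chainsI)
  fix S assume c: "c \<in> bchains X GG k" and S: "S \<subseteq> X'" "card S = k"
  interpret M: abelian_group "GG S" using E.abelian_group_G S(1) by blast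
  show "merge k c S \<in> carrier (GG S)"
    using S C.chainsD[OF c, of S] twin_closed[OF c S] by (auto simp: merge_def intro!: M.a_closed)
qed (auto simp: merge_def)

lemma merge_badd:
  "c \<in> bchains X GG k \<Longrightarrow> c' \<in> bchains X GG k \<Longrightarrow>
   merge k (badd X GG k c c') = badd X' GG k (merge k c) (merge k c')"
proof (rule ext)
  fix S assume c: "c \<in> bchains X GG k" and c': "c' \<in> bchains X GG k"
  show "merge k (badd X GG k c c') S = badd X' GG k (merge k c) (merge k c') S"
  proof (cases "S \<subseteq> X' \<and> card S = k")
    case True
    then have S: "S \<subseteq> X'" "card S = k" by auto
    interpret M: abelian_group "GG S" using E.abelian_group_G S(1) by blast
    have U: "insert b' (S - {b}) \<subseteq> X" "card (insert b' (S - {b})) = k" if "b \<in> S"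
      using S b'_X card_twin_swap[OF S(1) that] by auto
    show ?thesis
      using S U C.chainsD[OF c, of S] C.chainsD[OF c', of S] twin_closed[OF c S] twin_closed[OF c' S]
      by (auto simp: merge_def badd_def image_twin_swap M.signed_add M.a_ac)
  qed (auto simp: merge_def badd_def)
qed

lemma merge_bsmult:
  "r \<in> carrier R \<Longrightarrow> c \<in> bchains X GG k \<Longrightarrow> merge k (bsmult X GG k r c) = bsmult X' GG k r (merge k c)"
proof (rule ext)
  fix S assume r: "r \<in> carrier R" and c: "c \<in> bchains X GG k"
  show "merge k (bsmult X GG k r c) S = bsmult X' GG k r (merge k c) S"
  proof (cases "S \<subseteq> X' \<and> card S = k")
    case True
    then have S: "S \<subseteq> X'" "card S = k" by auto
    interpret M: module R "GG S" using E.module_G S(1) by blast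
    have U: "insert b' (S - {b}) \<subseteq> X" "card (insert b' (S - {b})) = k" if "b \<in> S"
      using S b'_X card_twin_swap[OF S(1) that] by auto
    show ?thesis
      using S U r C.chainsD[OF c, of S] twin_closed[OF c S]
      by (auto simp: merge_def bsmult_def image_twin_swap M.signed_smult M.smult_r_distr)
  qed (auto simp: merge_def bsmult_def)
qed

lemma extend_closed: "c \<in> bchains X' GG k \<Longrightarrow> extend k c \<in> bchains X GG k"
proof (rule C.chainsI)
  fix S assume c: "c \<in> bchains X' GG k" and S: "S \<subseteq> X" "card S = k"
  interpret M: abelian_group "GG S" using C.abelian_group_G S(1) by blast
  show "extend k c S \<in> carrier (GG S)" using S E.chainsD[OF c, of S] by (auto simp: extend_def)
qed (auto simp: extend_def)

lemma extend_bzero: "extend k (bzero X' GG k) = bzero X GG k"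
  by (rule ext) (auto simp: extend_def bzero_def)

lemma merge_extend: "c \<in> bchains X' GG k \<Longrightarrow> merge k (extend k c) = c"
proof (rule E.chains_eqI)
  fix S assume c: "c \<in> bchains X' GG k" and S: "S \<subseteq> X'" "card S = k"
  interpret M: abelian_group "GG S" using E.abelian_group_G S(1) by blast
  have "insert b' (S - {b}) \<subseteq> X" "card (insert b' (S - {b})) = k" if "b \<in> S"
    using S b'_X card_twin_swap[OF S(1) that] by auto
  then show "merge k (extend k c) S = c S"
    using S E.chainsD[OF c S] image_twin_swap by (auto simp: merge_def extend_def)
qed (use merge_closed extend_closed in blast)+

lemma idx_neq: "x \<in> X \<Longrightarrow> y \<in> X \<Longrightarrow> x \<noteq> y \<Longrightarrow> idx x \<noteq> idx y"
  using inj_idx by (meson inj_on_def)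

lemma twin_sign_odd:
  assumes "T \<subseteq> X" "b \<notin> T" "b' \<notin> T"
  shows "odd (count_below idx (insert b T) b' + (twin_sign T + count_below idx (insert b' T) b))"
proof -
  have "count_below idx (insert b T) b' + count_below idx (insert b' T) b =
      Suc (count_below idx T b' + count_below idx T b)"
    using assms finite_subset[OF _ finite_X] idx_neq[OF b'_X b_X] b_b'
    by (intro count_below_insert_swap) auto
  moreover have "\<And>p q r s :: nat. p + q = Suc (r + s) \<Longrightarrow> odd (p + (s + r + q))" by presburger
  ultimately show ?thesis unfolding twin_sign_def by blast
qed

lemma twin_sign_insert_parity:
  assumes "T \<subseteq> X" "b \<notin> T" "b' \<notin> T" "x \<in> X - T" "x \<noteq> b" "x \<noteq> b'"
  shows "even (count_below idx (insert b T) x + twin_sign (insert x T)) =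
    even (twin_sign T + count_below idx (insert b' T) x)"
proof -
  have "finite T" using assms(1) finite_subset[OF _ finite_X] by blast
  moreover have "idx b \<noteq> idx x" "idx x \<noteq> idx b'"
    using idx_neq[OF b_X, of x] idx_neq[of x b'] b'_X assms by auto
  ultimately show ?thesis
    using assms unfolding twin_sign_def
    by (simp add: count_below_insert) (cases "idx b < idx x"; cases "idx b' < idx x"; auto)
qed

lemma extend_face_term:
  assumes "S \<subseteq> X" "card S = k" "x \<in> X - S" "b' \<notin> insert x S"
  shows "C.face_term (extend (Suc k) c) S x = C.face_term c S x"
  using assms C.insert_index[OF assms(1-3)] by (simp add: C.face_term_def extend_def)

lemma extend_diff:
  assumes c: "c \<in> bchains X' GG (Suc k)"
  shows "extend k (E.diff (Suc k) c) = C.diff (Suc k) (extend (Suc k) c)"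
proof (rule ext)
  fix S
  show "extend k (E.diff (Suc k) c) S = C.diff (Suc k) (extend (Suc k) c) S"
  proof (cases "S \<subseteq> X \<and> card S = k")
    case True
    then have S: "S \<subseteq> X" "card S = k" by auto
    interpret M: abelian_group "GG S" using C.abelian_group_G S(1) by blast
    have zero: "C.face_term (extend (Suc k) c) S x = \<zero>\<^bsub>GG S\<^esub>" if "x \<in> X - S" "b' \<in> insert x S" for x
      using that C.insert_index[OF S that(1)] by (intro C.face_term_zero S(1)) (auto simp: extend_def)
    show ?thesis
    proof (cases "b' \<in> S")
      case True
      then have "C.diff (Suc k) (extend (Suc k) c) S = \<zero>\<^bsub>GG S\<^esub>"
        using S zero by (intro C.diff_eq_zero) auto
      then show ?thesis using S True by (simp add: extend_def)
    next
      case False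
      have X'S: "X - S - {b'} = X' - S" by auto
      have SX': "S \<subseteq> X'" using S False by auto
      have ft: "C.face_term c S \<in> X' - S \<rightarrow> carrier (GG S)"
        using E.face_term_closed[OF c] S False by blast
      have "C.diff (Suc k) (extend (Suc k) c) S = C.face_term (extend (Suc k) c) S b' \<oplus>\<^bsub>GG S\<^esub>
          finsum (GG S) (C.face_term (extend (Suc k) c) S) (X - S - {b'})"
        using False b'_X by (intro C.diff_remove extend_closed c S) auto
      also have "C.face_term (extend (Suc k) c) S b' = \<zero>\<^bsub>GG S\<^esub>"
        using False b'_X by (intro zero) auto
      also have "finsum (GG S) (C.face_term (extend (Suc k) c) S) (X - S - {b'}) =
          finsum (GG S) (C.face_term c S) (X' - S)"
        unfolding X'S using ft extend_face_term[OF S] False by (intro M.finsum_cong') auto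
      also have "\<zero>\<^bsub>GG S\<^esub> \<oplus>\<^bsub>GG S\<^esub> finsum (GG S) (C.face_term c S) (X' - S) = E.diff (Suc k) c S"
        using ft S False E.diff_eq[OF SX' S(2)] by (simp add: M.finsum_closed)
      finally show ?thesis using S False by (simp add: extend_def)
    qed
  qed (auto simp: extend_def C.diff_undefined)
qed

lemma face_term_merge_b:
  assumes c: "c \<in> bchains X GG (Suc k)" and S: "S \<subseteq> X'" "card S = k" "b \<notin> S"
  shows "C.face_term (merge (Suc k) c) S b = C.face_term c S b \<oplus>\<^bsub>GG S\<^esub> C.face_term c S b'"
proof -
  interpret M: abelian_group "GG S" using C.abelian_group_G S(1) by blast
  have i: "insert b S \<subseteq> X'" "card (insert b S) = Suc k" "insert b' S \<subseteq> X" "card (insert b' S) = Suc k"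
    using C.insert_index[of S k] S b_X b'_X b_b' by auto
  have v: "c (insert b S) \<in> carrier (GG (insert b S))" "c (insert b' S) \<in> carrier (GG (insert b S))"
    using C.chainsD[OF c, of "insert b S"] C.chainsD[OF c, of "insert b' S"] i image_insert_twin[of S]
    by auto
  have "merge (Suc k) c (insert b S) =
      c (insert b S) \<oplus>\<^bsub>GG (insert b S)\<^esub> signed (GG (insert b S)) (twin_sign S) (c (insert b' S))"
    using i S(3) by (simp add: merge_def)
  then have "C.face_term (merge (Suc k) c) S b = C.face_term c S b \<oplus>\<^bsub>GG S\<^esub>
      signed (GG S) (count_below idx S b + twin_sign S) (GGm (insert b S) S (c (insert b' S)))"
    unfolding C.face_term_def using i v g_X
    by (subst signed_Hm_add_signed[symmetric]) (auto simp: image_mono)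
  also have "signed (GG S) (count_below idx S b + twin_sign S) (GGm (insert b S) S (c (insert b' S))) =
      C.face_term c S b'"
    unfolding C.face_term_def image_insert_twin[symmetric]
    by (rule M.signed_parity_cong) (auto simp: twin_sign_def)
  finally show ?thesis .
qed

lemma face_term_merge_other:
  assumes "S \<subseteq> X'" "card S = k" "b \<notin> S" "x \<in> X' - S" "x \<noteq> b"
  shows "C.face_term (merge (Suc k) c) S x = C.face_term c S x"
proof -
  have "insert x S \<subseteq> X'" "card (insert x S) = Suc k"
    using E.insert_index assms by auto
  then show ?thesis using assms by (simp add: C.face_term_def merge_def)
qed

lemma face_term_merge_twin:
  assumes c: "c \<in> bchains X GG (Suc k)" and S: "S \<subseteq> X'" "card S = k" "b \<in> S" and x: "x \<in> X' - S"
  shows "C.face_term (merge (Suc k) c) S x = C.face_term c S x \<oplus>\<^bsub>GG S\<^esub>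
    signed (GG S) (twin_sign (S - {b})) (C.face_term c (insert b' (S - {b})) x)"
proof -
  interpret M: abelian_group "GG S" using C.abelian_group_G S(1) by blast
  define T U A where "T = S - {b}" and "U = insert b' T" and "A = insert x S"
  have A: "A \<subseteq> X" "card A = Suc k" "A - {b} = insert x T" "insert b' (insert x T) = insert x U"
    using E.insert_index[OF S(1,2) x] x S(3) unfolding A_def T_def U_def by auto
  have U: "U \<subseteq> X" "card U = k" "x \<in> X - U" "g ` U = g ` S" "g ` insert x U = g ` A"
    using S x b'_X card_twin_swap image_twin_swap unfolding A_def T_def U_def
    by (auto simp: image_insert)
  have v: "c A \<in> carrier (GG A)" "c (insert x U) \<in> carrier (GG A)"
    using C.chainsD[OF c A(1,2)] C.chainsD[OF c, of "insert x U"] C.insert_index[OF U(1-3)] U(5) by auto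
  have SA: "g ` S \<subseteq> g ` A" "g ` A \<subseteq> Y" using A(1) g_X unfolding A_def by auto
  have "merge (Suc k) c A = c A \<oplus>\<^bsub>GG A\<^esub> signed (GG A) (twin_sign (insert x T)) (c (insert x U))"
    using A E.insert_index[OF S(1,2) x] S(3) unfolding A_def by (simp add: merge_def)
  then have "C.face_term (merge (Suc k) c) S x = C.face_term c S x \<oplus>\<^bsub>GG S\<^esub>
      signed (GG S) (count_below idx S x + twin_sign (insert x T)) (GGm A S (c (insert x U)))"
    unfolding C.face_term_def A_def[symmetric] using signed_Hm_add_signed[OF SA v] by simp
  also have "signed (GG S) (count_below idx S x + twin_sign (insert x T)) (GGm A S (c (insert x U))) =
      signed (GG S) (twin_sign T) (C.face_term c U x)"
  proof -
    have "even (count_below idx S x + twin_sign (insert x T)) = even (twin_sign T + count_below idx U x)"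
      using twin_sign_insert_parity[of T x] S x b_b' unfolding T_def U_def by (auto simp: insert_absorb)
    then show ?thesis
      unfolding C.face_term_def using Hm_closed[OF SA v(2)] U(4,5) A_def
      by (simp add: M.signed_signed) (rule M.signed_parity_cong, auto)
  qed
  finally show ?thesis unfolding T_def U_def .
qed

lemma face_term_twin_cancel:
  assumes c: "c \<in> bchains X GG (Suc k)" and S: "S \<subseteq> X'" "card S = k" "b \<in> S"
  shows "C.face_term c S b' \<oplus>\<^bsub>GG S\<^esub>
    signed (GG S) (twin_sign (S - {b})) (C.face_term c (insert b' (S - {b})) b) = \<zero>\<^bsub>GG S\<^esub>"
proof -
  interpret M: abelian_group "GG S" using C.abelian_group_G S(1) by blast
  define T U where "T = S - {b}" and "U = insert b' T"
  have T: "T \<subseteq> X" "b \<notin> T" "b' \<notin> T" "S = insert b T" "insert b U = insert b' S"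
    using S unfolding T_def U_def by auto
  have gS: "g ` S \<subseteq> Y" "g ` insert b' S = g ` S" "g ` U = g ` S"
    using S g_X image_insert_b' image_twin_swap unfolding U_def T_def by auto
  have v: "c (insert b' S) \<in> carrier (GG S)"
    using C.chainsD[OF c, of "insert b' S"] C.insert_index[OF _ S(2), of b'] S b'_X gS(2) by auto
  have "C.face_term c S b' = signed (GG S) (count_below idx S b') (c (insert b' S))"
    unfolding C.face_term_def gS(2) using Hm_id[OF gS(1) v] by simp
  moreover have "C.face_term c U b = signed (GG S) (count_below idx U b) (c (insert b' S))"
    unfolding C.face_term_def T(5) gS(2,3) using Hm_id[OF gS(1) v] by simp
  moreover have "odd (count_below idx S b' + (twin_sign T + count_below idx U b))"
    using twin_sign_odd[OF T(1-3)] unfolding T(4) U_def .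
  ultimately show ?thesis
    unfolding T_def[symmetric] U_def[symmetric] using v by (simp add: M.signed_signed M.signed_cancel)
qed

lemma merge_diff_without_b:
  assumes c: "c \<in> bchains X GG (Suc k)" and S: "S \<subseteq> X'" "card S = k" "b \<notin> S"
  shows "C.diff (Suc k) c S = E.diff (Suc k) (merge (Suc k) c) S"
proof -
  interpret M: abelian_group "GG S" using C.abelian_group_G S(1) by blast
  have SX: "S \<subseteq> X" using S by auto
  have ft: "C.face_term c S \<in> X - S \<rightarrow> carrier (GG S)" using C.face_term_closed[OF c SX S(2)] .
  have b: "b \<in> X' - S" "b' \<in> X - S" using S b_X b'_X b_b' by auto
  have X'S: "X - S - {b'} = X' - S" by auto
  have "C.diff (Suc k) c S = C.face_term c S b' \<oplus>\<^bsub>GG S\<^esub> finsum (GG S) (C.face_term c S) (X' - S)"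
    using C.diff_remove[OF c SX S(2) b(2)] unfolding X'S .
  also have "finsum (GG S) (C.face_term c S) (X' - S) =
      C.face_term c S b \<oplus>\<^bsub>GG S\<^esub> finsum (GG S) (C.face_term c S) (X' - S - {b})"
    using ft b(1) finite_X by (intro M.finsum_remove) auto
  also have "finsum (GG S) (C.face_term c S) (X' - S - {b}) =
      finsum (GG S) (C.face_term (merge (Suc k) c) S) (X' - S - {b})"
    using E.face_term_closed[OF merge_closed[OF c] S(1,2)] face_term_merge_other[OF S]
    by (intro M.finsum_cong') auto
  finally have "C.diff (Suc k) c S = C.face_term c S b' \<oplus>\<^bsub>GG S\<^esub>
      (C.face_term c S b \<oplus>\<^bsub>GG S\<^esub> finsum (GG S) (C.face_term (merge (Suc k) c) S) (X' - S - {b}))" .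
  moreover have "E.diff (Suc k) (merge (Suc k) c) S = C.face_term (merge (Suc k) c) S b \<oplus>\<^bsub>GG S\<^esub>
      finsum (GG S) (C.face_term (merge (Suc k) c) S) (X' - S - {b})"
    using merge_closed[OF c] S b(1) by (intro E.diff_remove) auto
  moreover have "finsum (GG S) (C.face_term (merge (Suc k) c) S) (X' - S - {b}) \<in> carrier (GG S)"
    using E.face_term_closed[OF merge_closed[OF c] S(1,2)] by (intro M.finsum_closed) auto
  moreover have "C.face_term c S b \<in> carrier (GG S)" "C.face_term c S b' \<in> carrier (GG S)"
    using ft b by auto
  ultimately show ?thesis using face_term_merge_b[OF c S] by (simp add: M.a_ac)
qed

lemma merge_diff_with_b:
  assumes c: "c \<in> bchains X GG (Suc k)" and S: "S \<subseteq> X'" "card S = k" "b \<in> S"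
  shows "merge k (C.diff (Suc k) c) S = E.diff (Suc k) (merge (Suc k) c) S"
proof -
  interpret M: abelian_group "GG S" using C.abelian_group_G S(1) by blast
  define T U where "T = S - {b}" and "U = insert b' T"
  have SX: "S \<subseteq> X" using S by auto
  have U: "U \<subseteq> X" "card U = k" "b \<in> X - U" "X - U - {b} = X' - S" "GG U = GG S"
    using S b_X b'_X card_twin_swap image_twin_swap unfolding U_def T_def by auto
  have b': "b' \<in> X - S" "X - S - {b'} = X' - S" using S b'_X by auto
  have ftS: "C.face_term c S \<in> X' - S \<rightarrow> carrier (GG S)" using C.face_term_closed[OF c SX S(2)] by auto
  have ftU: "C.face_term c U \<in> X' - S \<rightarrow> carrier (GG S)" using C.face_term_closed[OF c U(1,2)] U(4,5) by auto
  have fin: "finite (X' - S)" using finite_X by auto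
  have "merge k (C.diff (Suc k) c) S =
      C.diff (Suc k) c S \<oplus>\<^bsub>GG S\<^esub> signed (GG S) (twin_sign T) (C.diff (Suc k) c U)"
    using S U(5) unfolding T_def U_def by (simp add: merge_def)
  also have "\<dots> = (C.face_term c S b' \<oplus>\<^bsub>GG S\<^esub> finsum (GG S) (C.face_term c S) (X' - S)) \<oplus>\<^bsub>GG S\<^esub>
      signed (GG S) (twin_sign T) (C.face_term c U b \<oplus>\<^bsub>GG S\<^esub> finsum (GG S) (C.face_term c U) (X' - S))"
    using C.diff_remove[OF c SX S(2) b'(1)] C.diff_remove[OF c U(1-3)] b'(2) U(4,5) by simp
  also have "\<dots> = (C.face_term c S b' \<oplus>\<^bsub>GG S\<^esub> signed (GG S) (twin_sign T) (C.face_term c U b)) \<oplus>\<^bsub>GG S\<^esub>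
      (finsum (GG S) (C.face_term c S) (X' - S) \<oplus>\<^bsub>GG S\<^esub>
       signed (GG S) (twin_sign T) (finsum (GG S) (C.face_term c U) (X' - S)))"
    using C.face_term_closed[OF c SX S(2)] C.face_term_closed[OF c U(1,2)] U(3,5) b'(1) ftS ftU
    by (simp add: M.signed_add M.finsum_closed M.a_ac Pi_iff)
  also have "\<dots> = finsum (GG S) (\<lambda>x. C.face_term c S x \<oplus>\<^bsub>GG S\<^esub>
      signed (GG S) (twin_sign T) (C.face_term c U x)) (X' - S)"
    using face_term_twin_cancel[OF c S] ftS ftU fin unfolding T_def[symmetric] U_def[symmetric]
    by (simp add: M.finsum_closed M.finsum_addf M.signed_finsum Pi_iff)
  also have "\<dots> = finsum (GG S) (C.face_term (merge (Suc k) c) S) (X' - S)"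
    using E.face_term_closed[OF merge_closed[OF c] S(1,2)] face_term_merge_twin[OF c S]
    unfolding T_def[symmetric] U_def[symmetric] by (intro M.finsum_cong') auto
  also have "\<dots> = E.diff (Suc k) (merge (Suc k) c) S"
    using E.diff_eq[OF S(1,2)] by simp
  finally show ?thesis .
qed

lemma merge_diff:
  assumes c: "c \<in> bchains X GG (Suc k)"
  shows "merge k (C.diff (Suc k) c) = E.diff (Suc k) (merge (Suc k) c)"
proof (rule ext)
  fix S
  show "merge k (C.diff (Suc k) c) S = E.diff (Suc k) (merge (Suc k) c) S"
  proof (cases "S \<subseteq> X' \<and> card S = k")
    case True
    then show ?thesis
      using merge_diff_without_b[OF c] merge_diff_with_b[OF c] by (cases "b \<in> S") (auto simp: merge_def)
  qed (auto simp: merge_def E.diff_undefined)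
qed

lemma homotopy_closed: "c \<in> bchains X GG k \<Longrightarrow> homotopy k c \<in> bchains X GG (Suc k)"
proof (rule C.chainsI)
  fix S assume c: "c \<in> bchains X GG k" and S: "S \<subseteq> X" "card S = Suc k"
  interpret M: abelian_group "GG S" using C.abelian_group_G S(1) by blast
  have "c (S - {b}) \<in> carrier (GG S)" if "b \<in> S" "b' \<in> S"
    using C.chainsD[OF c, of "S - {b}"] S that image_remove_b finite_subset[OF S(1) finite_X] by auto
  then show "homotopy k c S \<in> carrier (GG S)" using S by (auto simp: homotopy_def)
qed (auto simp: homotopy_def)

lemma face_term_homotopy_zero:
  "S \<subseteq> X \<Longrightarrow> card S = k \<Longrightarrow> x \<in> X - S \<Longrightarrow> \<not> (b \<in> insert x S \<and> b' \<in> insert x S) \<Longrightarrow>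
   C.face_term (homotopy k c) S x = \<zero>\<^bsub>GG S\<^esub>"
  by (rule C.face_term_zero) (use C.insert_index in \<open>auto simp: homotopy_def\<close>)

lemma diff_homotopy_with_b:
  assumes c: "c \<in> bchains X GG k" and S: "S \<subseteq> X" "card S = k" "b \<in> S" "b' \<notin> S"
  shows "C.diff (Suc k) (homotopy k c) S = signed (GG S)
    (count_below idx S b' + count_below idx (insert b' (S - {b})) b) (c (insert b' (S - {b})))"
proof -
  interpret M: abelian_group "GG S" using C.abelian_group_G S(1) by blast
  have gS: "g ` S \<subseteq> Y" using g_X S(1) by auto
  define U where "U = insert b' (S - {b})"
  have b': "b' \<in> X - S" using b'_X S by auto
  have i: "insert b' S \<subseteq> X" "card (insert b' S) = Suc k" "insert b' S - {b} = U"
    using C.insert_index[OF S(1,2) b'] b_b' unfolding U_def by auto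
  have v: "c U \<in> carrier (GG S)" using twin_closed[OF c _ S(2,3)] S unfolding U_def by auto
  have "C.face_term (homotopy k c) S b' = signed (GG S) (count_below idx S b' + count_below idx U b) (c U)"
    using i S(3) v Hm_id[OF gS M.signed_closed[OF v]] image_insert_b'[OF S(3)]
    by (auto simp: C.face_term_def homotopy_def M.signed_signed)
  moreover have "C.diff (Suc k) (homotopy k c) S = C.face_term (homotopy k c) S b'"
    using homotopy_closed[OF c] S b' face_term_homotopy_zero[OF S(1,2)] by (intro C.diff_eq_face_term) auto
  ultimately show ?thesis unfolding U_def by simp
qed

lemma diff_homotopy_with_b':
  assumes c: "c \<in> bchains X GG k" and S: "S \<subseteq> X" "card S = k" "b \<notin> S" "b' \<in> S"
  shows "C.diff (Suc k) (homotopy k c) S = c S"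
proof -
  interpret M: abelian_group "GG S" using C.abelian_group_G S(1) by blast
  have gS: "g ` S \<subseteq> Y" using g_X S(1) by auto
  have b: "b \<in> X - S" using b_X S by auto
  have i: "insert b S \<subseteq> X" "card (insert b S) = Suc k" "insert b S - {b} = S"
    using C.insert_index[OF S(1,2) b] S(3) by auto
  have v: "c S \<in> carrier (GG S)" using C.chainsD[OF c S(1,2)] .
  have "C.face_term (homotopy k c) S b = c S"
    using i S(4) v Hm_id[OF gS M.signed_closed[OF v]] image_insert_b[OF S(4)]
    by (auto simp: C.face_term_def homotopy_def M.signed_signed signed_def)
  moreover have "C.diff (Suc k) (homotopy k c) S = C.face_term (homotopy k c) S b"
    using homotopy_closed[OF c] S b face_term_homotopy_zero[OF S(1,2)] by (intro C.diff_eq_face_term) auto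
  ultimately show ?thesis by simp
qed

lemma face_term_homotopy_with_both:
  assumes c: "c \<in> bchains X GG k" and S: "S \<subseteq> X" "card S = k" "b \<in> S" "b' \<in> S" and x: "x \<in> X - S"
  shows "C.face_term (homotopy k c) S x =
    signed (GG S) (Suc (count_below idx (S - {b}) b)) (C.face_term c (S - {b}) x)"
proof -
  interpret M: abelian_group "GG S" using C.abelian_group_G S(1) by blast
  define V A where "V = S - {b}" and "A = insert x S"
  have A: "A \<subseteq> X" "card A = Suc k" "A - {b} = insert x V" "S \<subseteq> A" "b \<in> A" "b' \<in> A"
    using C.insert_index[OF S(1,2) x] x S(3,4) unfolding A_def V_def by auto
  have "card (A - {b}) = k" using A(2,5) finite_subset[OF A(1) finite_X] by simp
  then have V: "insert x V \<subseteq> X" "card (insert x V) = k" "g ` insert x V = g ` A" "g ` V = g ` S"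
    using A(1,3) image_remove_b[OF A(6)] image_remove_b[OF S(4)] by (auto simp: V_def)
  have gA: "g ` S \<subseteq> g ` A" "g ` A \<subseteq> Y" using A(1,4) g_X by auto
  have v: "c (insert x V) \<in> carrier (GG A)" using C.chainsD[OF c V(1,2)] V(3) by simp
  have "C.face_term (homotopy k c) S x = signed (GG S)
      (count_below idx S x + count_below idx (insert x V) b) (GGm A S (c (insert x V)))"
    using A v Hm_signed[OF gA v] Hm_closed[OF gA v]
    by (simp add: C.face_term_def homotopy_def M.signed_signed A_def[symmetric])
  also have "\<dots> = signed (GG S) (Suc (count_below idx V b) + count_below idx V x) (GGm A S (c (insert x V)))"
  proof (rule M.signed_parity_cong)
    have "count_below idx (insert b V) x + count_below idx (insert x V) b =
        Suc (count_below idx V x + count_below idx V b)"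
      using x S finite_subset[OF S(1) finite_X] idx_neq[of x b] b_X
      by (intro count_below_insert_swap) (auto simp: V_def)
    then show "even (count_below idx S x + count_below idx (insert x V) b) =
        even (Suc (count_below idx V b) + count_below idx V x)"
      using S(3) by (auto simp: V_def insert_absorb)
  qed
  also have "\<dots> = signed (GG S) (Suc (count_below idx V b)) (C.face_term c V x)"
    unfolding C.face_term_def V(3,4) using Hm_closed[OF gA v] by (simp add: M.signed_signed A_def)
  finally show ?thesis unfolding V_def .
qed

lemma diff_homotopy_with_both:
  assumes z: "c \<in> C.cycles k" and S: "S \<subseteq> X" "card S = k" "b \<in> S" "b' \<in> S"
  shows "C.diff (Suc k) (homotopy k c) S = c S"
proof -
  interpret M: abelian_group "GG S" using C.abelian_group_G S(1) by blast
  define V n where "V = S - {b}" and "n = Suc (count_below idx V b)"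
  have V: "V \<subseteq> X" "b \<in> X - V" "insert b V = S" "X - V - {b} = X - S" "g ` V = g ` S"
    using S image_remove_b[OF S(4)] unfolding V_def by auto
  obtain j where j: "k = Suc j" "card V = j"
    using S(2,3) finite_subset[OF S(1) finite_X] unfolding V_def by (cases k) auto
  have c: "c \<in> bchains X GG (Suc j)" using z j C.cycles_subset by auto
  have ftV: "C.face_term c V \<in> X - S \<rightarrow> carrier (GG S)" using C.face_term_closed[OF c V(1) j(2)] V by auto
  have cS: "c S \<in> carrier (GG S)" using C.chainsD[OF c, of S] S j by auto
  have "\<zero>\<^bsub>GG S\<^esub> = C.diff (Suc j) c V"
    using z j V by (auto simp: bcycles_def bzero_def)
  also have "\<dots> = C.face_term c V b \<oplus>\<^bsub>GG S\<^esub> finsum (GG S) (C.face_term c V) (X - S)"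
    using C.diff_remove[OF c V(1) j(2) V(2)] V by simp
  also have "C.face_term c V b = signed (GG S) (count_below idx V b) (c S)"
    unfolding C.face_term_def V(3,5) using Hm_id[OF image_subset_Y[OF S(1)] cS] by simp
  finally have sum_V: "finsum (GG S) (C.face_term c V) (X - S) = signed (GG S) n (c S)"
    unfolding n_def using cS ftV by (intro M.signed_add_eq_zero) (auto intro: M.finsum_closed)
  have "C.diff (Suc k) (homotopy k c) S = finsum (GG S) (\<lambda>x. signed (GG S) n (C.face_term c V x)) (X - S)"
    unfolding C.diff_eq[OF S(1,2)] using ftV
      face_term_homotopy_with_both[OF C.cycles_subset[THEN subsetD, OF z] S]
    unfolding V_def n_def by (intro M.finsum_cong') (auto intro!: M.signed_closed)
  also have "\<dots> = signed (GG S) n (finsum (GG S) (C.face_term c V) (X - S))"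
    using ftV finite_X by (simp add: M.signed_finsum)
  finally show ?thesis using cS sum_V M.signed_signed[of "c S" n n] by (simp add: signed_def)
qed

lemma homotopy_decomposition_without_b':
  assumes c: "c \<in> bchains X GG k" and S: "S \<subseteq> X" "card S = k" "b' \<notin> S"
  shows "c S = extend k (merge k c) S \<oplus>\<^bsub>GG S\<^esub> C.diff (Suc k) (homotopy k c) S"
proof -
  interpret M: abelian_group "GG S" using C.abelian_group_G S(1) by blast
  have cS: "c S \<in> carrier (GG S)" using C.chainsD[OF c S(1,2)] .
  have SX': "S \<subseteq> X'" using S by auto
  show ?thesis
  proof (cases "b \<in> S")
    case False
    then have "C.diff (Suc k) (homotopy k c) S = \<zero>\<^bsub>GG S\<^esub>"
      using S b_b' by (intro C.diff_eq_zero face_term_homotopy_zero) auto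
    then show ?thesis using S SX' False cS by (simp add: extend_def merge_def)
  next
    case True
    define T U where "T = S - {b}" and "U = insert b' T"
    have T: "T \<subseteq> X" "b \<notin> T" "b' \<notin> T" "S = insert b T" using S True unfolding T_def by auto
    have cU: "c U \<in> carrier (GG S)" using twin_closed[OF c SX' S(2) True] unfolding U_def T_def .
    have "odd (twin_sign T + (count_below idx S b' + count_below idx U b))"
      using twin_sign_odd[OF T(1-3)] T(4) unfolding U_def by (simp add: ac_simps)
    then show ?thesis
      using S SX' True cS cU M.signed_cancel diff_homotopy_with_b[OF c S(1,2) True S(3)]
      by (simp add: extend_def merge_def M.a_assoc flip: T_def U_def)
  qed
qed

lemma cycle_decomposition:
  assumes z: "c \<in> C.cycles k"
  shows "c = badd X GG k (extend k (merge k c)) (C.diff (Suc k) (homotopy k c))"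
proof -
  have c: "c \<in> bchains X GG k" using z C.cycles_subset by blast
  have "badd X GG k (extend k (merge k c)) (C.diff (Suc k) (homotopy k c)) \<in> bchains X GG k"
    using C.badd_closed extend_closed[OF merge_closed[OF c]] C.diff_closed[OF homotopy_closed[OF c]] by blast
  then show ?thesis
  proof (rule C.chains_eqI[OF c])
    fix S assume S: "S \<subseteq> X" "card S = k"
    interpret M: abelian_group "GG S" using C.abelian_group_G S(1) by blast
    have "c S = extend k (merge k c) S \<oplus>\<^bsub>GG S\<^esub> C.diff (Suc k) (homotopy k c) S"
    proof (cases "b' \<in> S")
      case True
      then have "C.diff (Suc k) (homotopy k c) S = c S"
        using diff_homotopy_with_b'[OF c S] diff_homotopy_with_both[OF z S] by blast
      then show ?thesis using S True C.chainsD[OF c S] by (simp add: extend_def)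
    qed (use homotopy_decomposition_without_b'[OF c S] in blast)
    then show "c S = badd X GG k (extend k (merge k c)) (C.diff (Suc k) (homotopy k c)) S"
      using S by (simp add: badd_def)
  qed
qed

theorem HC_collapse: "mod_isomorphic R (HC X idx GG GGm k) (HC X' idx GG GGm k)"
proof -
  interpret chain_retraction R X idx GG GGm X' idx GG GGm merge extend
    by (intro chain_retraction.intro C.boolean_complex_axioms E.boolean_complex_axioms
        chain_retraction_axioms.intro merge_closed merge_badd merge_bsmult merge_diff
        extend_closed extend_bzero extend_diff merge_extend)
      (use cycle_decomposition homotopy_closed C.cycles_subset in blast)+
  show ?thesis by (rule HC_isomorphic)
qed

end

subsection \<open>Relabelling along a bijection\<close>

definition inversions :: "('b \<Rightarrow> nat) \<Rightarrow> ('b \<Rightarrow> nat) \<Rightarrow> 'b set \<Rightarrow> nat" where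
  "inversions idx j S = card {(z, w). z \<in> S \<and> w \<in> S \<and> idx z < idx w \<and> j w < j z}"

lemma inversions_insert:
  assumes "finite S" "x \<notin> S"
  shows "inversions idx j (insert x S) = inversions idx j S + card {w \<in> S. idx x < idx w \<and> j w < j x}
     + card {z \<in> S. idx z < idx x \<and> j x < j z}"
proof -
  let ?P = "{(z, w). z \<in> S \<and> w \<in> S \<and> idx z < idx w \<and> j w < j z}"
  let ?A = "{w \<in> S. idx x < idx w \<and> j w < j x}"
  let ?B = "{z \<in> S. idx z < idx x \<and> j x < j z}"
  have e: "{(z, w). z \<in> insert x S \<and> w \<in> insert x S \<and> idx z < idx w \<and> j w < j z}
      = ?P \<union> Pair x ` ?A \<union> (\<lambda>z. (z, x)) ` ?B" by auto
  have fP: "finite ?P" by (rule finite_subset[of _ "S \<times> S"]) (use assms in auto)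
  have "card (?P \<union> Pair x ` ?A \<union> (\<lambda>z. (z, x)) ` ?B) = card ?P + card (Pair x ` ?A) + card ((\<lambda>z. (z, x)) ` ?B)"
    using assms fP by (subst card_Un_disjoint; auto)+
  also have "\<dots> = card ?P + card ?A + card ?B" by (simp add: card_image inj_on_def)
  finally show ?thesis unfolding inversions_def e .
qed

lemma inversions_insert_parity:
  assumes "finite S" "x \<notin> S" "\<And>z. z \<in> S \<Longrightarrow> idx z \<noteq> idx x" "\<And>z. z \<in> S \<Longrightarrow> j z \<noteq> j x"
  shows "even (count_below j S x + inversions idx j (insert x S)) =
    even (inversions idx j S + count_below idx S x)"
proof -
  let ?A = "{z \<in> S. idx z < idx x}" and ?A' = "{z \<in> S. j z < j x}"
  have "?A' - ?A = {w \<in> S. idx x < idx w \<and> j w < j x}" "?A - ?A' = {z \<in> S. idx z < idx x \<and> j x < j z}"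
    using assms(3,4) assms(3,4)[THEN not_sym] by (auto simp: not_less order.order_iff_strict)
  moreover have "card ?A' = card (?A' \<inter> ?A) + card (?A' - ?A)" "card ?A = card (?A \<inter> ?A') + card (?A - ?A')"
    using assms(1) by (simp_all add: card_Int_Diff)
  moreover have "?A' \<inter> ?A = ?A \<inter> ?A'" by auto
  ultimately show ?thesis
    unfolding count_below_def inversions_insert[OF assms(1,2)] by presburger
qed

locale relabel = restriction_system R Y H Hm
  for R :: "'r ring" and Y :: "'c set" and H :: "'c set \<Rightarrow> ('r, 'm) module" and Hm +
  fixes X :: "'b set" and idx :: "'b \<Rightarrow> nat" and g :: "'b \<Rightarrow> 'c" and idx' :: "'c \<Rightarrow> nat"
  assumes finite_X: "finite X" and inj_idx: "inj_on idx X" and bij_g: "bij_betw g X Y"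
    and inj_idx': "inj_on idx' Y"
begin

abbreviation "GG S \<equiv> H (g ` S)"
abbreviation "GGm T S \<equiv> Hm (g ` T) (g ` S)"
abbreviation "g' \<equiv> inv_into X g"

lemma g_X: "g ` X = Y" and inj_g: "inj_on g X"
  using bij_g by (simp_all add: bij_betw_def)

sublocale C: boolean_complex R X idx GG GGm
  by (rule boolean_complex_pullback) (use finite_X g_X in auto)

sublocale D: boolean_complex R Y idx' H Hm
  by (rule boolean_complex_self) (use finite_X g_X in auto)

lemma inv_image_subset: "U \<subseteq> Y \<Longrightarrow> g' ` U \<subseteq> X"
  using g_X by (auto intro: inv_into_into)

lemma image_inv_image: "U \<subseteq> Y \<Longrightarrow> g ` g' ` U = U"
  using g_X by (simp add: image_inv_into_cancel)

lemma inv_image_image: "S \<subseteq> X \<Longrightarrow> g' ` g ` S = S"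
  using inj_g by simp

lemma card_inv_image: "U \<subseteq> Y \<Longrightarrow> card (g' ` U) = card U"
  using g_X by (intro card_image inj_on_inv_into) simp

lemma card_image_g: "S \<subseteq> X \<Longrightarrow> card (g ` S) = card S"
  by (rule card_image, rule inj_on_subset[OF inj_g])

definition relabel_sign :: "'b set \<Rightarrow> nat" where
  "relabel_sign S = inversions idx (idx' \<circ> g) S"

text \<open>The sign of S is that of the permutation reordering S from idx to idx' \<circ> g; it makes
  push commute with the differentials (face_term_push).\<close>
definition push :: "nat \<Rightarrow> ('b set \<Rightarrow> 'm) \<Rightarrow> 'c set \<Rightarrow> 'm" where
  "push k c = (\<lambda>U. if U \<subseteq> Y \<and> card U = k then signed (H U) (relabel_sign (g' ` U)) (c (g' ` U)) else undefined)"

definition pull :: "nat \<Rightarrow> ('c set \<Rightarrow> 'm) \<Rightarrow> 'b set \<Rightarrow> 'm" where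
  "pull k c = (\<lambda>S. if S \<subseteq> X \<and> card S = k then signed (GG S) (relabel_sign S) (c (g ` S)) else undefined)"

lemma push_closed: "c \<in> bchains X GG k \<Longrightarrow> push k c \<in> bchains Y H k"
proof (rule D.chainsI)
  fix U assume c: "c \<in> bchains X GG k" and U: "U \<subseteq> Y" "card U = k"
  then have "c (g' ` U) \<in> carrier (H U)"
    using C.chainsD[OF c, of "g' ` U"] inv_image_subset card_inv_image image_inv_image by auto
  then show "push k c U \<in> carrier (H U)"
    using U abelian_group.signed_closed[OF D.abelian_group_G[OF U(1)]] by (simp add: push_def)
qed (auto simp: push_def)

lemma pull_closed: "c \<in> bchains Y H k \<Longrightarrow> pull k c \<in> bchains X GG k"
proof (rule C.chainsI)
  fix S assume c: "c \<in> bchains Y H k" and S: "S \<subseteq> X" "card S = k"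
  then have "c (g ` S) \<in> carrier (GG S)"
    using D.chainsD[OF c, of "g ` S"] g_X card_image_g by auto
  then show "pull k c S \<in> carrier (GG S)"
    using S abelian_group.signed_closed[OF C.abelian_group_G[OF S(1)]] by (simp add: pull_def)
qed (auto simp: pull_def)

lemma push_pull: "c \<in> bchains Y H k \<Longrightarrow> push k (pull k c) = c"
proof (rule D.chains_eqI)
  fix U assume c: "c \<in> bchains Y H k" and U: "U \<subseteq> Y" "card U = k"
  interpret M: abelian_group "H U" using D.abelian_group_G U(1) by blast
  show "push k (pull k c) U = c U"
    using U D.chainsD[OF c U] inv_image_subset card_inv_image image_inv_image
    by (simp add: push_def pull_def M.signed_signed signed_def)
qed (use push_closed pull_closed in blast)+

lemma pull_push: "c \<in> bchains X GG k \<Longrightarrow> pull k (push k c) = c"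
proof (rule C.chains_eqI)
  fix S assume c: "c \<in> bchains X GG k" and S: "S \<subseteq> X" "card S = k"
  interpret M: abelian_group "GG S" using C.abelian_group_G S(1) by blast
  have "g ` S \<subseteq> Y" using S g_X by auto
  then show "pull k (push k c) S = c S"
    using S C.chainsD[OF c S] card_image_g inv_image_image
    by (simp add: push_def pull_def M.signed_signed signed_def)
qed (use push_closed pull_closed in blast)+

lemma push_badd:
  "c \<in> bchains X GG k \<Longrightarrow> c' \<in> bchains X GG k \<Longrightarrow> push k (badd X GG k c c') = badd Y H k (push k c) (push k c')"
proof (rule ext)
  fix U assume c: "c \<in> bchains X GG k" and c': "c' \<in> bchains X GG k"
  show "push k (badd X GG k c c') U = badd Y H k (push k c) (push k c') U"
  proof (cases "U \<subseteq> Y \<and> card U = k")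
    case True
    interpret M: abelian_group "H U" using D.abelian_group_G True by blast
    show ?thesis
      using True C.chainsD[OF c, of "g' ` U"] C.chainsD[OF c', of "g' ` U"]
        inv_image_subset card_inv_image image_inv_image
      by (simp add: push_def badd_def M.signed_add)
  qed (auto simp: push_def badd_def)
qed

lemma push_bsmult:
  "r \<in> carrier R \<Longrightarrow> c \<in> bchains X GG k \<Longrightarrow> push k (bsmult X GG k r c) = bsmult Y H k r (push k c)"
proof (rule ext)
  fix U assume r: "r \<in> carrier R" and c: "c \<in> bchains X GG k"
  show "push k (bsmult X GG k r c) U = bsmult Y H k r (push k c) U"
  proof (cases "U \<subseteq> Y \<and> card U = k")
    case True
    interpret M: module R "H U" using D.module_G True by blast
    show ?thesis
      using True r C.chainsD[OF c, of "g' ` U"] inv_image_subset card_inv_image image_inv_image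
      by (simp add: push_def bsmult_def M.signed_smult)
  qed (auto simp: push_def bsmult_def)
qed

lemma face_term_push:
  assumes c: "c \<in> bchains X GG (Suc k)" and S: "S \<subseteq> X" "card S = k" and x: "x \<in> X - S"
  shows "D.face_term (push (Suc k) c) (g ` S) (g x) = signed (GG S) (relabel_sign S) (C.face_term c S x)"
proof -
  interpret M: abelian_group "GG S" using C.abelian_group_G S(1) by blast
  define A where "A = insert x S"
  have A0: "A \<subseteq> X" "card A = Suc k" using C.insert_index[OF S x] unfolding A_def by auto
  then have A: "A \<subseteq> X" "card A = Suc k" "g ` A \<subseteq> Y" "card (g ` A) = Suc k" "g ` S \<subseteq> g ` A"
    using g_X card_image_g[OF A0(1)] unfolding A_def by auto
  have v: "c A \<in> carrier (GG A)" using C.chainsD[OF c A(1,2)] .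
  have "D.face_term (push (Suc k) c) (g ` S) (g x) =
      signed (GG S) (count_below idx' (g ` S) (g x) + relabel_sign A) (GGm A S (c A))"
    using A v inv_image_image[OF A(1)] Hm_signed[OF A(5,3) v] Hm_closed[OF A(5,3) v]
    by (simp add: D.face_term_def push_def M.signed_signed A_def)
  also have "\<dots> = signed (GG S) (relabel_sign S + count_below idx S x) (GGm A S (c A))"
  proof (rule M.signed_parity_cong)
    have inj: "inj_on g (insert x S)" using inj_on_subset[OF inj_g] S x by auto
    have "{z \<in> g ` S. idx' z < idx' (g x)} = g ` {z \<in> S. (idx' \<circ> g) z < (idx' \<circ> g) x}" by auto
    then have "count_below idx' (g ` S) (g x) = count_below (idx' \<circ> g) S x"
      unfolding count_below_def using inj_on_subset[OF inj, of "{z \<in> S. (idx' \<circ> g) z < (idx' \<circ> g) x}"]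
      by (simp add: card_image subset_insertI2)
    moreover have "idx z \<noteq> idx x" "(idx' \<circ> g) z \<noteq> (idx' \<circ> g) x" if z: "z \<in> S" for z
    proof -
      have zx: "z \<in> X" "z \<noteq> x" using z S x by auto
      then show "idx z \<noteq> idx x" using inj_on_contraD[OF inj_idx] x by blast
      have "g z \<noteq> g x" using inj_on_contraD[OF inj_g] zx x by blast
      then show "(idx' \<circ> g) z \<noteq> (idx' \<circ> g) x" using inj_on_contraD[OF inj_idx'] zx x g_X by auto
    qed
    ultimately show "even (count_below idx' (g ` S) (g x) + relabel_sign A) =
        even (relabel_sign S + count_below idx S x)"
      unfolding relabel_sign_def A_def
      using inversions_insert_parity[of S x idx "idx' \<circ> g"] finite_subset[OF S(1) finite_X] x by auto
  qed
  also have "\<dots> = signed (GG S) (relabel_sign S) (C.face_term c S x)"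
    using Hm_closed[OF A(5,3) v] by (simp add: C.face_term_def M.signed_signed A_def)
  finally show ?thesis .
qed

lemma push_diff:
  assumes c: "c \<in> bchains X GG (Suc k)"
  shows "push k (C.diff (Suc k) c) = D.diff (Suc k) (push (Suc k) c)"
proof (rule ext)
  fix U
  show "push k (C.diff (Suc k) c) U = D.diff (Suc k) (push (Suc k) c) U"
  proof (cases "U \<subseteq> Y \<and> card U = k")
    case True
    define S where "S = g' ` U"
    have S: "S \<subseteq> X" "card S = k" "g ` S = U" "g ` (X - S) = Y - U"
      using True inv_image_subset card_inv_image image_inv_image g_X inj_on_image_set_diff[OF inj_g]
      unfolding S_def by auto
    interpret M: abelian_group "H U" using D.abelian_group_G True by blast
    have ft: "C.face_term c S \<in> X - S \<rightarrow> carrier (H U)" using C.face_term_closed[OF c S(1,2)] S(3) by simp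
    have "D.diff (Suc k) (push (Suc k) c) U = finsum (H U) (D.face_term (push (Suc k) c) U) (g ` (X - S))"
      using D.diff_eq True S(4) by simp
    also have "\<dots> = finsum (H U) (\<lambda>x. D.face_term (push (Suc k) c) U (g x)) (X - S)"
      using D.face_term_closed[OF push_closed[OF c]] True S(4) inj_on_subset[OF inj_g]
      by (intro M.finsum_reindex) auto
    also have "\<dots> = finsum (H U) (\<lambda>x. signed (H U) (relabel_sign S) (C.face_term c S x)) (X - S)"
    proof (intro M.finsum_cong')
      show "(\<lambda>x. signed (H U) (relabel_sign S) (C.face_term c S x)) \<in> X - S \<rightarrow> carrier (H U)"
        using ft by (auto intro: M.signed_closed)
      show "D.face_term (push (Suc k) c) U (g x) = signed (H U) (relabel_sign S) (C.face_term c S x)"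
        if "x \<in> X - S" for x
        using face_term_push[OF c S(1,2) that] S(3) by simp
    qed simp
    also have "\<dots> = push k (C.diff (Suc k) c) U"
      using True ft finite_X C.diff_eq[OF S(1,2)] S(3) by (simp add: push_def M.signed_finsum flip: S_def)
    finally show ?thesis by simp
  qed (auto simp: push_def D.diff_undefined)
qed

lemma pull_diff:
  assumes c: "c \<in> bchains Y H (Suc k)"
  shows "pull k (D.diff (Suc k) c) = C.diff (Suc k) (pull (Suc k) c)"
proof -
  have "D.diff (Suc k) c = push k (C.diff (Suc k) (pull (Suc k) c))"
    using push_diff[OF pull_closed[OF c]] push_pull[OF c] by simp
  then show ?thesis using pull_push C.diff_closed pull_closed[OF c] by simp
qed

theorem HC_relabel: "mod_isomorphic R (HC X idx GG GGm k) (HC Y idx' H Hm k)"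
proof -
  interpret chain_retraction R X idx GG GGm Y idx' H Hm push pull
  proof (intro chain_retraction.intro C.boolean_complex_axioms D.boolean_complex_axioms
      chain_retraction_axioms.intro push_closed push_badd push_bsmult push_diff pull_closed
      pull_diff push_pull)
    show "pull k (bzero Y H k) = bzero X GG k" for k
    proof (rule ext)
      fix S
      show "pull k (bzero Y H k) S = bzero X GG k S"
        using g_X card_image_g abelian_group.signed_zero[OF C.abelian_group_G, of S]
        by (auto simp: pull_def bzero_def)
    qed
    show "\<exists>h \<in> bchains X GG (Suc k). c = badd X GG k (pull k (push k c)) (C.diff (Suc k) h)"
      if "c \<in> C.cycles k" for c k
    proof -
      interpret A: abelian_group "C.chain_group k" by (rule C.abelian_group_chain_group)
      have "c \<in> bchains X GG k" using that C.cycles_subset by blast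
      then show ?thesis
        using pull_push C.diff_bzero C.bzero_closed A.r_zero by (intro bexI[of _ "bzero X GG (Suc k)"]) auto
    qed
  qed
  show ?thesis by (rule HC_isomorphic)
qed

end

lemma mod_isomorphic_trans:
  "mod_isomorphic R A B \<Longrightarrow> mod_isomorphic R B C \<Longrightarrow> mod_isomorphic R A C"
  unfolding mod_isomorphic_def
proof (elim exE conjE, intro exI conjI ballI)
  fix h h'
  assume h: "bij_betw h (carrier A) (carrier B)" "\<forall>P\<in>carrier A. \<forall>Q\<in>carrier A. h (P \<oplus>\<^bsub>A\<^esub> Q) = h P \<oplus>\<^bsub>B\<^esub> h Q"
      "\<forall>r\<in>carrier R. \<forall>P\<in>carrier A. h (r \<odot>\<^bsub>A\<^esub> P) = r \<odot>\<^bsub>B\<^esub> h P"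
    and h': "bij_betw h' (carrier B) (carrier C)" "\<forall>P\<in>carrier B. \<forall>Q\<in>carrier B. h' (P \<oplus>\<^bsub>B\<^esub> Q) = h' P \<oplus>\<^bsub>C\<^esub> h' Q"
      "\<forall>r\<in>carrier R. \<forall>P\<in>carrier B. h' (r \<odot>\<^bsub>B\<^esub> P) = r \<odot>\<^bsub>C\<^esub> h' P"
  have hB: "P \<in> carrier A \<Longrightarrow> h P \<in> carrier B" for P using h(1) bij_betwE by blast
  show "bij_betw (h' \<circ> h) (carrier A) (carrier C)" using h(1) h'(1) by (rule bij_betw_trans)
  show "(h' \<circ> h) (P \<oplus>\<^bsub>A\<^esub> Q) = (h' \<circ> h) P \<oplus>\<^bsub>C\<^esub> (h' \<circ> h) Q"
    if "P \<in> carrier A" "Q \<in> carrier A" for P Q using that h h' hB by simp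
  show "(h' \<circ> h) (r \<odot>\<^bsub>A\<^esub> P) = r \<odot>\<^bsub>C\<^esub> (h' \<circ> h) P"
    if "r \<in> carrier R" "P \<in> carrier A" for r P using that h h' hB by simp
qed

lemma image_Diff_twin: "b \<in> X \<Longrightarrow> b \<noteq> b' \<Longrightarrow> g b = g b' \<Longrightarrow> g ` (X - {b'}) = g ` X"
  by (auto simp: image_iff) (metis DiffI singletonD)

theorem (in restriction_system) HC_pullback:
  fixes X :: "'b set" and idx :: "'b \<Rightarrow> nat" and g :: "'b \<Rightarrow> 'c" and idx' :: "'c \<Rightarrow> nat"
  assumes "finite X" "inj_on idx X" "g ` X = Y" "inj_on idx' Y"
  shows "mod_isomorphic R (HC X idx (\<lambda>S. H (g ` S)) (\<lambda>T S. Hm (g ` T) (g ` S)) k) (HC Y idx' H Hm k)"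
  using assms
proof (induction "card X" arbitrary: X rule: less_induct)
  case less
  show ?case
  proof (cases "inj_on g X")
    case True
    interpret relabel R Y H Hm X idx g idx'
      using less.prems True by unfold_locales (auto simp: bij_betw_def)
    show ?thesis by (rule HC_relabel)
  next
    case False
    then obtain b b' where b: "b \<in> X" "b' \<in> X" "b \<noteq> b'" "g b = g b'" unfolding inj_on_def by blast
    interpret collapse R Y H Hm X idx g b b'
      using less.prems b by unfold_locales auto
    have "mod_isomorphic R (HC (X - {b'}) idx GG GGm k) (HC Y idx' H Hm k)"
      using less.prems b image_Diff_twin[of b X b' g] card_Diff1_less[OF less.prems(1) b(2)]
      by (intro less.hyps) (auto intro: inj_on_subset)
    with HC_collapse show ?thesis by (rule mod_isomorphic_trans)
  qed
qed

section \<open>Geometric lattices\<close>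

lemma lcovers_below:
  fixes x y :: "'a::{finite, order}"
  assumes "x < y"
  obtains z where "lcovers x z" "z \<le> y"
proof -
  let ?M = "{z. x < z \<and> z \<le> y}"
  have "?M \<noteq> {}" using assms by auto
  from finite_has_minimal[OF finite this]
  obtain z where z: "z \<in> ?M" "\<forall>w \<in> ?M. w \<le> z \<longrightarrow> z = w" by (elim bexE)
  have "lcovers x z" unfolding lcovers_def
  proof (intro conjI notI)
    show "x < z" using z(1) by simp
    assume "\<exists>w. x < w \<and> w < z"
    then obtain w where w: "x < w" "w < z" by blast
    then have "w \<in> ?M" using z(1) by (auto intro: order.strict_implies_order order.trans)
    then show False using z(2) w(2) by fastforce
  qed
  with z(1) show thesis using that by blast
qed

lemma rank_strict_mono:
  fixes rk :: "'a::{finite, order} \<Rightarrow> nat"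
  assumes rk: "\<And>x y. lcovers x y \<Longrightarrow> rk y = rk x + 1" and "x < y"
  shows "rk x < rk y"
  using assms(2)
proof (induction "card {z. x < z \<and> z \<le> y}" arbitrary: x rule: less_induct)
  case less
  obtain z where z: "lcovers x z" "z \<le> y" using lcovers_below[OF less.prems] by blast
  show ?case
  proof (cases "z = y")
    case False
    then have "z < y" using z(2) by simp
    moreover have "{w. z < w \<and> w \<le> y} \<subset> {w. x < w \<and> w \<le> y}"
      using z less_trans[of x z] unfolding lcovers_def by auto
    then have "card {w. z < w \<and> w \<le> y} < card {w. x < w \<and> w \<le> y}"
      by (rule psubset_card_mono[OF finite])
    ultimately have "rk z < rk y" using less.hyps by blast
    then show ?thesis using rk[OF z(1)] by simp
  qed (use rk[OF z(1)] in simp)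
qed

lemma atom_le_atom: "p \<in> latoms \<Longrightarrow> q \<in> latoms \<Longrightarrow> p \<le> q \<Longrightarrow> p = q"
proof (rule ccontr)
  assume "p \<in> latoms" "q \<in> latoms" "p \<le> q" "p \<noteq> q"
  then have "bot < p" "p < q" "\<not> (\<exists>z. bot < z \<and> z < q)" by (auto simp: latoms_def lcovers_def)
  then show False by blast
qed

lemma lcovers_sup_atom:
  fixes a b :: "'a::{finite, complete_lattice}"
  assumes geo: "geometric_lattice TYPE('a)" and a: "a \<in> latoms" and b: "b \<in> latoms" "b \<noteq> a"
  shows "lcovers a (sup a b)"
proof -
  obtain rk :: "'a \<Rightarrow> nat" where rk0: "rk bot = 0" and rk: "\<And>x y. lcovers x y \<Longrightarrow> rk y = rk x + 1"
    and semimod: "\<And>x y. rk (sup x y) + rk (inf x y) \<le> rk x + rk y"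
    using geo unfolding geometric_lattice_def by blast
  have rk_atom: "rk p = 1" if "p \<in> latoms" for p using rk[of bot p] that rk0 by (simp add: latoms_def)
  have "\<not> b \<le> a" "\<not> a \<le> b" using atom_le_atom a b by blast+
  then have "inf a b < a" "a < sup a b"
    by (metis inf_le1 inf_le2 order.not_eq_order_implies_strict, metis sup_ge1 sup_ge2 order.not_eq_order_implies_strict)
  then have "inf a b = bot" using a bot.not_eq_extremum unfolding latoms_def lcovers_def by blast
  then have "rk (sup a b) \<le> 2" using semimod[of a b] rk0 rk_atom a b by simp
  moreover have "rk z < rk (sup a b)" "rk a < rk z" if "a < z" "z < sup a b" for z
    using rank_strict_mono[of rk, OF rk] that by blast+
  ultimately show ?thesis
    using \<open>a < sup a b\<close> rk_atom[OF a] unfolding lcovers_def by fastforce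
qed

lemma lcovers_eq_sup_atom:
  fixes a c :: "'a::{finite, complete_lattice}"
  assumes geo: "geometric_lattice TYPE('a)" and c: "lcovers a c"
  obtains b where "b \<in> latoms - {a}" "sup a b = c"
proof -
  have "a < c" using c by (simp add: lcovers_def)
  moreover have "c = Sup {p \<in> latoms. p \<le> c}" using geo unfolding geometric_lattice_def by blast
  ultimately obtain p where p: "p \<in> latoms" "p \<le> c" "\<not> p \<le> a"
    by (metis (mono_tags, lifting) Sup_least leD mem_Collect_eq)
  then have "a < sup a p" "sup a p \<le> c" using \<open>a < c\<close>
    by (metis sup_ge1 sup_ge2 order.not_eq_order_implies_strict, simp)
  then have "sup a p = c" using c unfolding lcovers_def by (auto simp: order.order_iff_strict)
  with p that show thesis by blast
qed

lemma image_sup_atoms: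
  fixes a :: "'a::{finite, complete_lattice}"
  assumes "geometric_lattice TYPE('a)" "a \<in> latoms"
  shows "sup a ` (latoms - {a}) = {x. lcovers a x}"
  using lcovers_sup_atom[OF assms] lcovers_eq_sup_atom[OF assms(1)] by blast

lemma lub_in_atLeast: "lub_in {x. (a::'a::complete_lattice) \<le> x} U = sup a (Sup U)"
  unfolding lub_in_def
proof (rule the_equality)
  fix u assume "u \<in> {x. a \<le> x} \<and> (\<forall>s\<in>U. s \<le> u) \<and> (\<forall>v\<in>{x. a \<le> x}. (\<forall>s\<in>U. s \<le> v) \<longrightarrow> u \<le> v)"
  moreover have "\<forall>s\<in>U. s \<le> sup a (Sup U)" by (simp add: Sup_upper le_supI2)
  ultimately show "u = sup a (Sup U)" by (intro antisym) (auto intro: Sup_least)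
qed (auto intro: le_supI2 Sup_upper Sup_least)

lemma sup_Sup_image_sup: "sup a (Sup (sup a ` S)) = Sup (insert (a::'a::complete_lattice) S)"
proof (rule antisym)
  have "a \<le> Sup (insert a S)" "s \<le> Sup (insert a S)" if "s \<in> S" for s
    using that by (auto intro: Sup_upper le_supI2)
  then show "sup a (Sup (sup a ` S)) \<le> Sup (insert a S)" by (auto intro!: Sup_least)
  have "Sup S \<le> Sup (sup a ` S)" by (rule Sup_mono) (use sup_ge2 in blast)
  then show "Sup (insert a S) \<le> sup a (Sup (sup a ` S))" by (simp add: Sup_insert le_supI2)
qed

theorem theorem6:
  fixes R :: "'r ring"
    and F :: "'a::{finite,complete_lattice} \<Rightarrow> ('r,'m) module"
    and res :: "'a \<Rightarrow> 'a \<Rightarrow> 'm \<Rightarrow> 'm"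
    and a :: 'a
    and idx1 idx2 :: "'a \<Rightarrow> nat"
    and i :: nat
  assumes "geometric_lattice TYPE('a)"
    and "is_sheaf R F res"
    and "a \<in> latoms"
    and "inj_on idx1 (latoms - {a})"
    and "inj_on idx2 {x. lcovers a x}"
  shows "mod_isomorphic R
     (HC (latoms - {a}) idx1 (\<lambda>S. F (Sup (insert a S)))
         (\<lambda>T S. res (Sup (insert a T)) (Sup (insert a S))) i)
     (HC {x. lcovers a x} idx2 (\<lambda>S. F (lub_in {x. a \<le> x} S))
         (\<lambda>T S. res (lub_in {x. a \<le> x} T) (lub_in {x. a \<le> x} S)) i)"
proof -
  let ?\<phi> = "lub_in {x. a \<le> x}"
  interpret restriction_system R "{x. lcovers a x}" "\<lambda>U. F (?\<phi> U)" "\<lambda>U V. res (?\<phi> U) (?\<phi> V)"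
    using assms(2) by (rule restriction_system_sheaf) (simp add: lub_in_atLeast Sup_subset_mono sup.coboundedI2)
  have "mod_isomorphic R
      (HC (latoms - {a}) idx1 (\<lambda>S. F (?\<phi> (sup a ` S))) (\<lambda>T S. res (?\<phi> (sup a ` T)) (?\<phi> (sup a ` S))) i)
      (HC {x. lcovers a x} idx2 (\<lambda>U. F (?\<phi> U)) (\<lambda>U V. res (?\<phi> U) (?\<phi> V)) i)"
    using assms(1,3-5) image_sup_atoms by (intro HC_pullback) auto
  then show ?thesis by (simp add: lub_in_atLeast sup_Sup_image_sup)
qed

end
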